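(* Let $A\subseteq\mathcal B$. Every $A$-restricted strongly polynomial-time computable functional $F\colon A\to\mathcal B$ has a total strongly polynomial-time computable extension $\tilde F\colon\mathcal B\to\mathcal B$.
   Context: $\Sigma=\{0,1\}$, $\mathcal B=(\Sigma^* )^{\Sigma^*}$ is the set of total string functions. An oracle Turing machine $M^?$ with oracle $\varphi$ replaces, upon entering its query state, the query-tape content $\mathbf b$ by $\varphi(\mathbf b)$ in one time step; $\operatorname{time}_{M^\varphi}(\mathbf a)\in\mathbb N\cup\{\infty\}$ is its number of steps on input $\mathbf a$. $M^?$ computes $F\colon A\to\mathcal B$ if $M^\varphi=F(\varphi)$ for all $\varphi\in A$. Length revision function: with $\mathbf b_k$ the content of the oracle answer tape at step $k$ of the run of $M^\varphi$ on $\mathbf a$, $o_{\varphi,\mathbf a}(0)=|\mathbf a|$, $o_{\varphi,\mathbf a}(n+1)=\max\{o_{\varphi,\mathbf a}(n),|\mathbf b_{n+1}|\}$. For $A\subseteq\mathcal B$, $t\colon\mathbb N\to\mathbb N$ is an $A$-step-count for $M^?$ if for all $\varphi\in A$, $\mathbf a\in\Sigma^*$, $n\le\operatorname{time}_{M^\varphi}(\mathbf a)$: $n\le t(o_{\varphi,\mathbf a}(n))$; $M^?$ has $A$-finite length-revision if there is $N\in\mathbb N$ with $\#o_{\varphi,\mathbf a}(\mathbb N)\le N$ for all $\varphi\in A$, $\mathbf a\in\Sigma^*$. $F\colon A\to\mathcal B$ is $A$-restricted strongly polynomial-time computable if computed by a machine having $A$-finite length-revision and a polynomial $A$-step-count.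 A total functional is strongly polynomial-time computable if this holds with $A=\mathcal B$. *)

theory Defs
  imports Main "HOL-Library.Extended_Nat" "HOL-Computational_Algebra.Polynomial"
begin

text \<open>Strings over \<Sigma> = {0,1} are bool lists (False = 0, True = 1);
  the set of total string functions is bool list \<Rightarrow> bool list.\<close>

type_synonym str = "bool list"
type_synonym strfun = "str \<Rightarrow> str"

datatype sym = SBlank | S0 | S1
datatype dir = MvL | MvR | Stay

type_synonym tape = "(nat \<Rightarrow> sym) \<times> nat"

text \<open>Tape layout: tape 0 = input (read-only), tape 1 = oracle answer tape (read-only),
  tape 2 = query tape, tape 3 = output tape, tapes 4.. = work tapes.\<close>
record otm =
  nwork  :: nat
  nstates :: nat
  delta  :: "nat \<Rightarrow> sym list \<Rightarrow> nat \<times> (sym \<times> dir) list"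
  qstart :: nat
  qhalt  :: nat
  qquery :: nat
  qans   :: nat

definition ntapes :: "otm \<Rightarrow> nat" where
  "ntapes M = 4 + nwork M"

text \<open>Well-formedness: finitely many states, transitions stay inside the state set and
  give one action per tape (the transition table is finite since only states below
  nstates and symbol vectors of length ntapes over a finite alphabet are ever consulted).\<close>
definition wf_otm :: "otm \<Rightarrow> bool" where
  "wf_otm M \<longleftrightarrow> qstart M < nstates M \<and> qhalt M < nstates M \<and> qquery M < nstates M
     \<and> qans M < nstates M
     \<and> (\<forall>q < nstates M. \<forall>ss. length ss = ntapes M \<longrightarrow>
           fst (delta M q ss) < nstates M \<and> length (snd (delta M q ss)) = ntapes M)"

definition encode :: "str \<Rightarrow> (nat \<Rightarrow> sym)" where
  "encode w = (\<lambda>i. if i < length w then (if w ! i then S1 else S0) else SBlank)"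

definition content :: "tape \<Rightarrow> str" where
  "content t = (if \<exists>n. fst t n = SBlank
     then map (\<lambda>i. fst t i = S1) [0..<(LEAST n. fst t n = SBlank)] else [])"

definition mv :: "dir \<Rightarrow> nat \<Rightarrow> nat" where
  "mv d h = (case d of MvL \<Rightarrow> h - 1 | MvR \<Rightarrow> h + 1 | Stay \<Rightarrow> h)"

definition act :: "nat \<Rightarrow> tape \<Rightarrow> sym \<times> dir \<Rightarrow> tape" where
  "act i t a = (if i \<le> 1 then (fst t, mv (snd a) (snd t))
                else ((fst t)(snd t := fst a), mv (snd a) (snd t)))"

type_synonym config = "nat \<times> tape list"

definition step :: "otm \<Rightarrow> strfun \<Rightarrow> config \<Rightarrow> config" where
  "step M \<phi> c = (let q = fst c; ts = snd c in
     if q = qhalt M then c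
     else if q = qquery M then (qans M, ts[1 := (encode (\<phi> (content (ts ! 2))), 0)])
     else (let r = delta M q (map (\<lambda>t. fst t (snd t)) ts) in
           (fst r, map (\<lambda>i. act i (ts ! i) (snd r ! i)) [0..<length ts])))"

definition initial :: "otm \<Rightarrow> str \<Rightarrow> config" where
  "initial M a = (qstart M, (encode a, 0) # replicate (ntapes M - 1) (\<lambda>_. SBlank, 0))"

definition run :: "otm \<Rightarrow> strfun \<Rightarrow> str \<Rightarrow> nat \<Rightarrow> config" where
  "run M \<phi> a n = (step M \<phi> ^^ n) (initial M a)"

definition halted_at :: "otm \<Rightarrow> strfun \<Rightarrow> str \<Rightarrow> nat \<Rightarrow> bool" where
  "halted_at M \<phi> a n \<longleftrightarrow> fst (run M \<phi> a n) = qhalt M"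

definition time :: "otm \<Rightarrow> strfun \<Rightarrow> str \<Rightarrow> enat" where
  "time M \<phi> a = (if \<exists>n. halted_at M \<phi> a n then enat (LEAST n. halted_at M \<phi> a n) else \<infinity>)"

definition otm_output :: "otm \<Rightarrow> strfun \<Rightarrow> str \<Rightarrow> str" where
  "otm_output M \<phi> a = content (snd (run M \<phi> a (LEAST n. halted_at M \<phi> a n)) ! 3)"

definition computes :: "otm \<Rightarrow> strfun set \<Rightarrow> (strfun \<Rightarrow> strfun) \<Rightarrow> bool" where
  "computes M A F \<longleftrightarrow> (\<forall>\<phi>\<in>A. \<forall>a. time M \<phi> a \<noteq> \<infinity> \<and> otm_output M \<phi> a = F \<phi> a)"

fun lrev :: "otm \<Rightarrow> strfun \<Rightarrow> str \<Rightarrow> nat \<Rightarrow> nat" where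
  "lrev M \<phi> a 0 = length a"
| "lrev M \<phi> a (Suc n) = max (lrev M \<phi> a n) (length (content (snd (run M \<phi> a (Suc n)) ! 1)))"

definition step_count :: "otm \<Rightarrow> strfun set \<Rightarrow> (nat \<Rightarrow> nat) \<Rightarrow> bool" where
  "step_count M A t \<longleftrightarrow> (\<forall>\<phi>\<in>A. \<forall>a. \<forall>n. enat n \<le> time M \<phi> a \<longrightarrow> n \<le> t (lrev M \<phi> a n))"

definition finite_length_revision :: "otm \<Rightarrow> strfun set \<Rightarrow> bool" where
  "finite_length_revision M A \<longleftrightarrow> (\<exists>N. \<forall>\<phi>\<in>A. \<forall>a.
      finite (range (lrev M \<phi> a)) \<and> card (range (lrev M \<phi> a)) \<le> N)"

definition is_polynomial :: "(nat \<Rightarrow> nat) \<Rightarrow> bool" where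
  "is_polynomial t \<longleftrightarrow> (\<exists>p :: nat poly. \<forall>n. t n = poly p n)"

definition restricted_strongly_ptime :: "strfun set \<Rightarrow> (strfun \<Rightarrow> strfun) \<Rightarrow> bool" where
  "restricted_strongly_ptime A F \<longleftrightarrow> (\<exists>M. wf_otm M \<and> computes M A F
      \<and> finite_length_revision M A \<and> (\<exists>t. is_polynomial t \<and> step_count M A t))"

definition strongly_ptime :: "(strfun \<Rightarrow> strfun) \<Rightarrow> bool" where
  "strongly_ptime F \<longleftrightarrow> restricted_strongly_ptime UNIV F"

end

theory Submission
  imports Defs
begin

(* Let M compute F on A with at most Nc distinct answer lengths and step count t, where
   t x < (x + 2)^K.  The machine N runs M step by step, guarded by two counters.  A clock of K
   digits in base L + 1, where L - 1 is the current length revision, advances once per step of M;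
   it overflows only after (L + 1)^K - 1 > t (L - 1) steps.  Whenever an oracle answer is longer
   than all previous ones, the clock is reset to the new L and a counter of capacity Nc is
   incremented.  N halts when M halts or when either guard overflows.  For oracles in A no guard
   overflows, so N outputs what M outputs.  For every oracle, the length revision of N takes
   values of the length revision of M up to its (Nc + 2)-th distinct value, and between two
   revisions N makes only polynomially many steps in the current length. *)

lemma encode_Nil: "encode [] = (\<lambda>_. SBlank)"
  by (simp add: encode_def)

lemma content_encode[simp]: "content (encode b, h) = b"
proof -
  have ex: "\<exists>n. encode b n = SBlank" by (rule exI[of _ "length b"]) (simp add: encode_def)
  have le: "(LEAST n. encode b n = SBlank) = length b"
    by (rule Least_equality) (auto simp: encode_def split: if_splits)
  have "content (encode b, h) = map (\<lambda>i. encode b i = S1) [0..<length b]"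
    unfolding content_def using ex le by simp
  then show ?thesis by (auto simp: encode_def intro!: nth_equalityI)
qed

lemma content_blank[simp]: "content (\<lambda>_. SBlank, h) = []"
  using content_encode[of "[]" h] by (simp add: encode_Nil)

lemma content_fst_cong: "fst t = fst u \<Longrightarrow> content t = content u"
  by (simp add: content_def)

lemma run_0: "run M \<phi> a 0 = initial M a" by (simp add: run_def)

lemma run_Suc: "run M \<phi> a (Suc n) = step M \<phi> (run M \<phi> a n)" by (simp add: run_def)

lemma step_halted: "fst c = qhalt M \<Longrightarrow> step M \<phi> c = c"
  by (simp add: step_def Let_def)

lemma run_halted_add: "halted_at M \<phi> a n \<Longrightarrow> run M \<phi> a (n + k) = run M \<phi> a n"
  by (induction k) (auto simp: run_Suc halted_at_def step_halted)

lemma run_halted_stable: "halted_at M \<phi> a n \<Longrightarrow> n \<le> n' \<Longrightarrow> run M \<phi> a n' = run M \<phi> a n"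
  using run_halted_add[of M \<phi> a n "n' - n"] by simp

lemma halted_at_mono: "halted_at M \<phi> a n \<Longrightarrow> n \<le> n' \<Longrightarrow> halted_at M \<phi> a n'"
  using run_halted_stable[of M \<phi> a n n'] by (simp add: halted_at_def)

lemma lrev_mono: "n \<le> n' \<Longrightarrow> lrev M \<phi> a n \<le> lrev M \<phi> a n'"
proof (induction n' )
  case 0 then show ?case by simp
next
  case (Suc n') then show ?case by (cases "n = Suc n'") auto
qed

lemma time_ge_Suc: "\<not> halted_at M \<phi> a n \<Longrightarrow> enat (Suc n) \<le> time M \<phi> a"
proof (cases "\<exists>j. halted_at M \<phi> a j")
  case True
  assume nh: "\<not> halted_at M \<phi> a n"
  have "n < (LEAST j. halted_at M \<phi> a j)"
  proof (rule ccontr)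
    assume "\<not> n < (LEAST j. halted_at M \<phi> a j)"
    then have "(LEAST j. halted_at M \<phi> a j) \<le> n" by simp
    moreover have "halted_at M \<phi> a (LEAST j. halted_at M \<phi> a j)" using True by (rule LeastI_ex)
    ultimately show False using halted_at_mono nh by blast
  qed
  then show ?thesis using True by (simp add: time_def)
next
  case False then show ?thesis by (simp add: time_def)
qed

lemma ntapes_ge_4: "4 \<le> ntapes M" by (simp add: ntapes_def)

lemma run_wf:
  assumes "wf_otm M"
  shows "fst (run M \<phi> a m) < nstates M \<and> length (snd (run M \<phi> a m)) = ntapes M"
proof (induction m)
  case 0 then show ?case using assms ntapes_ge_4[of M]
    by (simp add: run_0 initial_def wf_otm_def)
next
  case (Suc m)
  obtain q ts where c: "run M \<phi> a m = (q, ts)" by (cases "run M \<phi> a m")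
  show ?case using Suc assms c
    by (auto simp: run_Suc step_def Let_def wf_otm_def)
qed

lemma answer_length_le_lrev: "length (content (snd (run M \<phi> a m) ! 1)) \<le> lrev M \<phi> a m"
proof (cases m)
  case 0
  have "snd (run M \<phi> a 0) ! 1 = (\<lambda>_. SBlank, 0)" using ntapes_ge_4[of M]
    by (simp add: run_0 initial_def nth_Cons' )
  then show ?thesis using 0 by simp
next
  case (Suc k) then show ?thesis by simp
qed

lemma finite_subset_image_atMost: "finite S \<Longrightarrow> S \<subseteq> range f \<Longrightarrow> \<exists>n::nat. S \<subseteq> f ` {..n}"
proof (induction S rule: finite_induct)
  case empty then show ?case by simp
next
  case (insert x S)
  then obtain n where n: "S \<subseteq> f ` {..n}" by auto
  from insert obtain k where k: "x = f k" by auto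
  have "insert x S \<subseteq> f ` {..max n k}" using n k by auto
  then show ?case by blast
qed

lemma finite_range_card_le:
  assumes "\<And>n::nat. card (f ` {..n}) \<le> B"
  shows "finite (range f) \<and> card (range f) \<le> B"
proof (cases "finite (range f)")
  case False
  then obtain S where S: "S \<subseteq> range f" "finite S" "card S = Suc B"
    using infinite_arbitrarily_large by blast
  then obtain n where "S \<subseteq> f ` {..n}" using finite_subset_image_atMost by blast
  then have "card S \<le> card (f ` {..n})" by (intro card_mono) auto
  then show ?thesis using assms[of n] S by simp
next
  case True
  then obtain n where "range f \<subseteq> f ` {..n}" using finite_subset_image_atMost by blast
  then have "card (range f) \<le> card (f ` {..n})" by (intro card_mono) auto
  then show ?thesis using assms[of n] True by simp
qed

lemma poly_less_power: fixes p :: "nat poly" shows "\<exists>K. \<forall>x. poly p x < (x+2)^K"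
proof -
  define c where "c = (\<Sum>i\<le>degree p. coeff p i)"
  define d where "d = degree p"
  have "poly p x < (x+2)^(c+d)" for x
  proof -
    have "poly p x = (\<Sum>i\<le>degree p. coeff p i * x^i)" by (simp add: poly_altdef)
    also have "\<dots> \<le> (\<Sum>i\<le>degree p. coeff p i * (x+2)^d)"
    proof (rule sum_mono)
      fix i assume "i \<in> {..degree p}"
      then have "i \<le> d" by (simp add: d_def)
      have "x^i \<le> (x+2)^i" by (rule power_mono) auto
      also have "\<dots> \<le> (x+2)^d" using \<open>i \<le> d\<close> by (rule power_increasing) auto
      finally show "coeff p i * x^i \<le> coeff p i * (x+2)^d" by simp
    qed
    also have "\<dots> = c * (x+2)^d" by (simp add: c_def sum_distrib_right)
    also have "\<dots> < (x+2)^c * (x+2)^d"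
    proof -
      have "c < 2^c" by (rule less_exp)
      also have "(2::nat)^c \<le> (x+2)^c" by (rule power_mono) auto
      finally show ?thesis by simp
    qed
    also have "\<dots> = (x+2)^(c+d)" by (simp add: power_add)
    finally show ?thesis .
  qed
  then show ?thesis by blast
qed

lemma is_polynomial_less_power: "is_polynomial t \<Longrightarrow> \<exists>K. \<forall>x. t x < (x+2)^K"
  unfolding is_polynomial_def using poly_less_power by metis

lemma is_polynomial_const: "is_polynomial (\<lambda>_. c)"
  unfolding is_polynomial_def by (rule exI[of _ "[:c:]"]) simp

lemma is_polynomial_id: "is_polynomial (\<lambda>n. n)"
  unfolding is_polynomial_def by (rule exI[of _ "[:0,1:]"]) simp

lemma is_polynomial_add: "is_polynomial f \<Longrightarrow> is_polynomial g \<Longrightarrow> is_polynomial (\<lambda>n. f n + g n)"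
  unfolding is_polynomial_def by (metis poly_add)

lemma is_polynomial_mult: "is_polynomial f \<Longrightarrow> is_polynomial g \<Longrightarrow> is_polynomial (\<lambda>n. f n * g n)"
  unfolding is_polynomial_def by (metis poly_mult)

lemma is_polynomial_power: "is_polynomial f \<Longrightarrow> is_polynomial (\<lambda>n. f n ^ k)"
  unfolding is_polynomial_def by (metis poly_power)

lemma Suc_sum_max_digits: "Suc (\<Sum>i<j. L*(L+1)^i) = (L+1::nat)^j"
  by (induction j) (auto simp: algebra_simps)

lemma sum_lessThan_split:
  fixes f :: "nat \<Rightarrow> nat"
  assumes "j < K"
  shows "(\<Sum>i<K. f i) = (\<Sum>i<j. f i) + f j + (\<Sum>i\<in>{Suc j..<K}. f i)"
proof -
  have "(\<Sum>i<K. f i) = (\<Sum>i\<in>{0..<K}. f i)" by (simp add: atLeast0LessThan)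
  also have "\<dots> = (\<Sum>i\<in>{0..<j}. f i) + (\<Sum>i\<in>{j..<K}. f i)"
    using assms by (simp add: sum.atLeastLessThan_concat)
  also have "(\<Sum>i\<in>{j..<K}. f i) = f j + (\<Sum>i\<in>{Suc j..<K}. f i)"
    using assms by (simp add: sum.atLeast_Suc_lessThan)
  finally show ?thesis by (simp add: atLeast0LessThan)
qed

lemma digits_value_increment:
  fixes v v' :: "nat \<Rightarrow> nat"
  assumes "j < K" "\<forall>i<j. v i = L" "\<forall>i<j. v' i = 0" "v' j = Suc (v j)"
    "\<forall>i. j < i \<and> i < K \<longrightarrow> v' i = v i"
  shows "(\<Sum>i<K. v' i * (L+1)^i) = Suc (\<Sum>i<K. v i * (L+1)^i)"
proof -
  have a: "(\<Sum>i<j. v i * (L+1)^i) = (\<Sum>i<j. L * (L+1)^i)" using assms(2) by simp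
  have b: "(\<Sum>i<j. v' i * (L+1)^i) = 0" using assms(3) by simp
  have c: "(\<Sum>i\<in>{Suc j..<K}. v' i * (L+1)^i) = (\<Sum>i\<in>{Suc j..<K}. v i * (L+1)^i)"
    using assms(5) by (intro sum.cong) auto
  show ?thesis
    using sum_lessThan_split[OF assms(1), of "\<lambda>i. v' i * (L+1)^i"] sum_lessThan_split[OF assms(1), of "\<lambda>i. v i * (L+1)^i"]
      a b c assms(4) Suc_sum_max_digits[of L j] by simp
qed

lemma reflected_digits_increment:
  fixes p :: "nat \<Rightarrow> nat" and d :: "nat \<Rightarrow> bool"
  assumes j: "j < K" and p: "\<forall>i<K. p i \<le> L" and vj: "(if d j then L - p j else p j) \<noteq> L"
    and low: "\<forall>i<j. (if d i then L - p i else p i) = L"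
    and p'_def: "\<And>i. p' i = (if i = j then (if d j then p j - 1 else Suc (p j)) else p i)"
    and d'_def: "\<And>i. d' i = (if i < j then \<not> d i else d i)"
  shows "(\<Sum>i<K. (if d' i then L - p' i else p' i) * (L+1)^i)
      = Suc (\<Sum>i<K. (if d i then L - p i else p i) * (L+1)^i)"
    and "\<forall>i<K. p' i \<le> L"
proof -
  have pj: "d j \<Longrightarrow> 0 < p j" "\<not> d j \<Longrightarrow> p j < L" using vj p j by auto
  show "(\<Sum>i<K. (if d' i then L - p' i else p' i) * (L+1)^i)
      = Suc (\<Sum>i<K. (if d i then L - p i else p i) * (L+1)^i)"
  proof (rule digits_value_increment[OF j low])
    show "\<forall>i<j. (if d' i then L - p' i else p' i) = 0"
    proof (intro allI impI)
      fix i assume i: "i < j"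
      then have "i < K" "(if d i then L - p i else p i) = L" using j low by auto
      then show "(if d' i then L - p' i else p' i) = 0" using p i by (auto simp: p'_def d'_def)
    qed
    show "(if d' j then L - p' j else p' j) = Suc (if d j then L - p j else p j)"
      using pj p j by (auto simp: p'_def d'_def)
    show "\<forall>i. j < i \<and> i < K \<longrightarrow> (if d' i then L - p' i else p' i) = (if d i then L - p i else p i)"
      by (auto simp: p'_def d'_def)
  qed
  show "\<forall>i<K. p' i \<le> L" using p pj by (auto simp: p'_def)
qed

lemma digits_value_le:
  fixes v :: "nat \<Rightarrow> nat"
  assumes "\<forall>i<K. v i \<le> L"
  shows "(\<Sum>i<K. v i * (L+1)^i) \<le> (L+1)^K - 1"
proof -
  have "(\<Sum>i<K. v i * (L+1)^i) \<le> (\<Sum>i<K. L * (L+1)^i)"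
    using assms by (intro sum_mono) auto
  then show ?thesis using Suc_sum_max_digits[of L K] by simp
qed

lemma digits_value_max:
  fixes v :: "nat \<Rightarrow> nat"
  assumes "\<forall>i<K. v i = L"
  shows "(\<Sum>i<K. v i * (L+1)^i) = (L+1)^K - 1"
proof -
  have "(\<Sum>i<K. v i * (L+1)^i) = (\<Sum>i<K. L * (L+1)^i)"
    using assms by (intro sum.cong) auto
  then show ?thesis using Suc_sum_max_digits[of L K] by simp
qed

definition ruler :: "nat \<Rightarrow> nat \<Rightarrow> sym" where
  "ruler L j = (if j = 0 then S0 else if j < L then S1 else SBlank)"

definition ruler_mix :: "nat \<Rightarrow> nat \<Rightarrow> nat \<Rightarrow> nat \<Rightarrow> sym" where
  "ruler_mix L Lo h j = (if j < h then ruler L j else ruler Lo j)"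

definition blank_tape :: tape where "blank_tape = (\<lambda>_. SBlank, 0)"

lemma act_keep[simp]: "act x t (fst t (snd t), Stay) = t"
  by (cases t) (simp add: act_def mv_def)

lemma act_hi: "2 \<le> x \<Longrightarrow> act x t (s, d) = ((fst t)(snd t := s), mv d (snd t))"
  by (simp add: act_def)

lemma act_lo: "x \<le> 1 \<Longrightarrow> act x t (s, d) = (fst t, mv d (snd t))"
  by (simp add: act_def)

lemma mv_simps[simp]: "mv MvL h = h - 1" "mv MvR h = Suc h" "mv Stay h = h"
  by (simp_all add: mv_def)

lemma ruler_ext: "1 \<le> L \<Longrightarrow> (ruler L)(L := S1) = ruler (Suc L)"
  by (auto simp: ruler_def fun_eq_iff)

lemma ruler_1: "(\<lambda>_. SBlank)(0 := S0) = ruler 1"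
  by (auto simp: ruler_def fun_eq_iff)

lemma ruler_S0_iff: "1 \<le> L \<Longrightarrow> ruler L j = S0 \<longleftrightarrow> j = 0"
  by (auto simp: ruler_def)

lemma ruler_Blank_iff: "1 \<le> L \<Longrightarrow> ruler L j = SBlank \<longleftrightarrow> L \<le> j"
  by (auto simp: ruler_def)

lemma encode_blank_iff: "encode a p = SBlank \<longleftrightarrow> length a \<le> p"
  by (simp add: encode_def)

abbreviation heads :: "tape list \<Rightarrow> sym list" where
  "heads ts \<equiv> map (\<lambda>t. fst t (snd t)) ts"

locale clocked_sim =
  fixes M :: otm and K :: nat and Nc :: nat and A :: "strfun set" and t :: "nat \<Rightarrow> nat"
  assumes wfM: "wf_otm M"
    and scM: "step_count M A t"
    and flrM: "\<forall>\<phi>\<in>A. \<forall>a. finite (range (lrev M \<phi> a)) \<and> card (range (lrev M \<phi> a)) \<le> Nc"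
    and tK: "\<forall>x. t x < (x+2)^K"
begin

declare lrev.simps(2)[simp del]

(* Tapes of N: those of M, a ruler of length L, K clock tapes holding the digits of the clock as
   head positions on copies of the ruler, K direction tapes and Nc cells of the revision counter. *)
abbreviation "tM \<equiv> ntapes M"

abbreviation "iRuler \<equiv> ntapes M"

abbreviation "iClock i \<equiv> ntapes M + 1 + i"

abbreviation "iDir i \<equiv> ntapes M + 1 + K + i"

abbreviation "iCount j \<equiv> ntapes M + 1 + 2*K + j"

abbreviation "isClock x \<equiv> ntapes M + 1 \<le> x \<and> x < ntapes M + 1 + K"

abbreviation "isDir x \<equiv> ntapes M + 1 + K \<le> x \<and> x < ntapes M + 1 + 2*K"

abbreviation "isCount x \<equiv> ntapes M + 1 + 2*K \<le> x \<and> x < ntapes M + 1 + 2*K + Nc"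

(* States of N beyond those of M: INIT, COPY and INIT_REWIND draw the rulers for the input;
   after an oracle answer, ANSWER, SCAN and REWIND measure its length against the ruler, SCAN_EXT
   and REWIND_EXT extend the ruler for a new maximal length, and SYNC1 to SYNC3 copy the new ruler
   to the clock tapes and reset the clock. *)
abbreviation "HALT \<equiv> nstates M"

abbreviation "QRY \<equiv> nstates M + 1"

abbreviation "INIT \<equiv> nstates M + 2"

abbreviation "COPY \<equiv> nstates M + 3"

abbreviation "INIT_REWIND \<equiv> nstates M + 4"

abbreviation "ANSWER \<equiv> nstates M + 5"

abbreviation "SCAN \<equiv> nstates M + 6"

abbreviation "SCAN_EXT \<equiv> nstates M + 7"

abbreviation "REWIND \<equiv> nstates M + 8"

abbreviation "REWIND_EXT \<equiv> nstates M + 9"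

abbreviation "SYNC1 \<equiv> nstates M + 10"

abbreviation "SYNC2 \<equiv> nstates M + 11"

abbreviation "SYNC3 \<equiv> nstates M + 12"

definition nt :: nat where "nt = ntapes M + 1 + 2*K + Nc"

lemma nt_simps[simp]: "iRuler < nt" "x < tM \<Longrightarrow> x < nt" "i < K \<Longrightarrow> iClock i < nt" "i < K \<Longrightarrow> iDir i < nt"
  "j < Nc \<Longrightarrow> iCount j < nt" "tM < nt" "0 < nt" "1 < nt" "2 < nt" "3 < nt"
  "i < K \<Longrightarrow> Suc (ntapes M + i) < nt" "i < K \<Longrightarrow> Suc (ntapes M + K + i) < nt"
  "j < Nc \<Longrightarrow> Suc (ntapes M + 2*K + j) < nt" "Suc 0 < nt"
  using ntapes_ge_4[of M] by (auto simp: nt_def)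

definition sim_state :: "nat \<Rightarrow> nat" where
  "sim_state q = (if q = qhalt M then HALT else if q = qquery M then QRY else q)"

definition counts_down :: "sym list \<Rightarrow> nat \<Rightarrow> bool" where "counts_down ss i = (ss ! iDir i = S1)"

definition digit_done :: "sym list \<Rightarrow> nat \<Rightarrow> bool" where
  "digit_done ss i = (if counts_down ss i then ss ! iClock i = S0 else ss ! iClock i = SBlank)"

definition clock_expired :: "sym list \<Rightarrow> bool" where "clock_expired ss = (\<forall>i<K. digit_done ss i)"

definition least_live_digit :: "sym list \<Rightarrow> nat" where "least_live_digit ss = (LEAST i. i < K \<and> \<not> digit_done ss i)"

definition keep :: "sym list \<Rightarrow> nat \<Rightarrow> sym \<times> dir" where "keep ss x = (ss ! x, Stay)"

definition tick_act :: "sym list \<Rightarrow> nat \<Rightarrow> sym \<times> dir" where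
  "tick_act ss x = (if isClock x then (if x - (tM+1) = least_live_digit ss then (ss ! x, if counts_down ss (least_live_digit ss) then MvL else MvR) else keep ss x)
     else if isDir x then (if x - (tM+1+K) < least_live_digit ss then (if counts_down ss (x - (tM+1+K)) then S0 else S1, Stay) else keep ss x)
     else keep ss x)"

definition sim_act :: "nat \<Rightarrow> sym list \<Rightarrow> nat \<Rightarrow> sym \<times> dir" where
  "sim_act q ss x = (if x < tM then snd (delta M q (take tM ss)) ! x else tick_act ss x)"

definition "init_act ss x = (if x = iRuler \<or> isClock x then (S0, MvR) else keep ss x)"

definition "copy_act ss x = (if x = 0 then (ss ! 0, MvR) else if x = iRuler \<or> isClock x then (S1, MvR) else keep ss x)"

definition "init_rewind_act ss x = (if x = 0 \<or> x = iRuler \<or> isClock x then (ss ! x, MvL) else keep ss x)"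

definition "answer_act ss x = (if x = iRuler then (ss ! x, MvR) else keep ss x)"

definition "scan_act ss x = (if x = 1 \<or> x = iRuler then (ss ! x, MvR) else keep ss x)"

definition "extend_act ss x = (if x = 1 then (ss ! 1, MvR) else if x = iRuler then (S1, MvR) else keep ss x)"

definition "rewind_act ss x = (if x = 1 \<or> x = iRuler then (ss ! x, MvL) else keep ss x)"

definition least_free_counter :: "sym list \<Rightarrow> nat" where "least_free_counter ss = (LEAST j. j < Nc \<and> ss ! iCount j \<noteq> S1)"

definition "revision_act ss x = (if isDir x then (S0, Stay) else if isCount x \<and> x - (tM+1+2*K) = least_free_counter ss then (S1, Stay) else keep ss x)"

definition "sync1_act ss x = (if isClock x \<and> ss ! x \<noteq> S0 then (ss ! x, MvL) else keep ss x)"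

definition "sync2_act ss x = (if x = iRuler then (ss ! x, MvR) else if isClock x then (ss ! iRuler, MvR) else keep ss x)"

definition "sync3_act ss x = (if x = iRuler \<or> isClock x then (ss ! x, MvL) else keep ss x)"

definition acts :: "(nat \<Rightarrow> sym \<times> dir) \<Rightarrow> (sym \<times> dir) list" where "acts g = map g [0..<nt]"

definition deltaN :: "nat \<Rightarrow> sym list \<Rightarrow> nat \<times> (sym \<times> dir) list" where
  "deltaN q ss = (
   if q < nstates M then (if clock_expired ss then (HALT, acts (keep ss))
                          else (sim_state (fst (delta M q (take tM ss))), acts (sim_act q ss)))
   else if q = INIT then (COPY, acts (init_act ss))
   else if q = COPY then (if ss ! 0 = SBlank then (INIT_REWIND, acts (keep ss)) else (COPY, acts (copy_act ss)))
   else if q = INIT_REWIND then (if ss ! iRuler = S0 then (sim_state (qstart M), acts (keep ss)) else (INIT_REWIND, acts (init_rewind_act ss)))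
   else if q = ANSWER then (SCAN, acts (answer_act ss))
   else if q = SCAN then (if ss ! 1 = SBlank then (REWIND, acts (keep ss))
                          else if ss ! iRuler = SBlank then (SCAN_EXT, acts (extend_act ss)) else (SCAN, acts (scan_act ss)))
   else if q = SCAN_EXT then (if ss ! 1 = SBlank then (REWIND_EXT, acts (keep ss)) else (SCAN_EXT, acts (extend_act ss)))
   else if q = REWIND then (if ss ! iRuler = S0 then (if clock_expired ss then (HALT, acts (keep ss)) else (sim_state (qans M), acts (tick_act ss)))
                           else (REWIND, acts (rewind_act ss)))
   else if q = REWIND_EXT then (if ss ! iRuler = S0 then (if (\<forall>j<Nc. ss ! iCount j = S1) then (HALT, acts (keep ss)) else (SYNC1, acts (revision_act ss)))
                           else (REWIND_EXT, acts (rewind_act ss)))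
   else if q = SYNC1 then (if (\<forall>i<K. ss ! iClock i = S0) then (SYNC2, acts (keep ss)) else (SYNC1, acts (sync1_act ss)))
   else if q = SYNC2 then (if ss ! iRuler = SBlank then (SYNC3, acts (keep ss)) else (SYNC2, acts (sync2_act ss)))
   else if q = SYNC3 then (if ss ! iRuler = S0 then (sim_state (qans M), acts (keep ss)) else (SYNC3, acts (sync3_act ss)))
   else (HALT, acts (keep ss)))"

definition N :: otm where
  "N = \<lparr>nwork = nwork M + 1 + 2*K + Nc, nstates = nstates M + 13, delta = deltaN,
        qstart = INIT, qhalt = HALT, qquery = QRY, qans = ANSWER\<rparr>"

lemma N_simps[simp]: "nstates N = nstates M + 13" "delta N = deltaN" "qstart N = INIT"
  "qhalt N = HALT" "qquery N = QRY" "qans N = ANSWER" "ntapes N = nt"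
  by (simp_all add: N_def ntapes_def nt_def)

lemma ntapes_M_ge: "4 \<le> tM" by (rule ntapes_ge_4)

lemma sim_state_lt: "q < nstates M \<Longrightarrow> sim_state q < nstates M + 13"
  by (simp add: sim_state_def)

lemma wf_N: "wf_otm N"
proof -
  have M: "qstart M < nstates M" "qans M < nstates M"
    "\<And>q ss. q < nstates M \<Longrightarrow> length ss = tM \<Longrightarrow> fst (delta M q ss) < nstates M"
    using wfM by (auto simp: wf_otm_def)
  have "fst (deltaN q ss) < nstates M + 13 \<and> length (snd (deltaN q ss)) = nt"
    if "q < nstates M + 13" "length ss = nt" for q ss
    using that M sim_state_lt by (auto simp: deltaN_def acts_def Let_def)
  then show ?thesis by (auto simp: wf_otm_def)
qed

lemma step_N:
  assumes "q \<noteq> HALT" "q \<noteq> QRY" "length ts = nt"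
    "deltaN q (heads ts) = (q', acts g)"
  shows "step N \<phi> (q, ts) = (q', map (\<lambda>i. act i (ts!i) (g i)) [0..<nt])"
  using assms by (auto simp: step_def Let_def acts_def intro!: map_cong)

lemma step_N_acts:
  assumes "q \<noteq> HALT" "q \<noteq> QRY" "length ts = nt" "deltaN q (heads ts) = (q', acts g)"
  obtains ts' where "step N \<phi> (q, ts) = (q', ts')" "length ts' = nt"
    "\<And>x. x < nt \<Longrightarrow> ts' ! x = act x (ts ! x) (g x)"
    "\<And>x. x < nt \<Longrightarrow> g x = keep (heads ts) x \<Longrightarrow> ts' ! x = ts ! x"
  using step_N[OF assms] assms(3) by (simp add: keep_def)

lemma step_N_keep:
  assumes "q \<noteq> HALT" "q \<noteq> QRY" "length ts = nt" "deltaN q (heads ts) = (q', acts (keep (heads ts)))"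
  shows "step N \<phi> (q, ts) = (q', ts)"
  using step_N[OF assms] assms(3) by (auto simp: keep_def intro: nth_equalityI)

lemma step_N_query: "step N \<phi> (QRY, ts) = (ANSWER, ts[1 := (encode (\<phi> (content (ts!2))), 0)])"
  by (simp add: step_def)

lemma step_N_halt: "step N \<phi> (HALT, ts) = (HALT, ts)"
  by (simp add: step_def)

lemma act_keep_ss[simp]: "x < length ts \<Longrightarrow> act x (ts!x) (keep (heads ts) x) = ts!x"
  by (simp add: keep_def)

lemma blank_tape_simps[simp]: "fst blank_tape = (\<lambda>_. SBlank)" "snd blank_tape = 0"
  by (simp_all add: blank_tape_def)

lemma content_blank_tape[simp]: "content blank_tape = []"
  by (simp add: blank_tape_def)

lemma run_M_0: "snd (run M \<phi> a 0) ! 0 = (encode a, 0)"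
   "0 < x \<Longrightarrow> x < tM \<Longrightarrow> snd (run M \<phi> a 0) ! x = blank_tape"
   "fst (run M \<phi> a 0) = qstart M"
  using ntapes_M_ge by (auto simp: run_0 initial_def blank_tape_def nth_Cons')

lemma run_M_wf: "fst (run M \<phi> a m) < nstates M" "length (snd (run M \<phi> a m)) = tM"
  using run_wf[OF wfM] by auto

lemma run_M_Suc_delta:
  assumes "run M \<phi> a m = (qM, tsM)" "qM \<noteq> qhalt M" "qM \<noteq> qquery M"
  shows "run M \<phi> a (Suc m) = (fst (delta M qM (heads tsM)),
     map (\<lambda>i. act i (tsM!i) (snd (delta M qM (heads tsM)) ! i)) [0..<tM])"
  using assms run_M_wf[of \<phi> a m] by (simp add: run_Suc step_def Let_def)

lemma run_M_Suc_query:
  assumes "run M \<phi> a m = (qM, tsM)" "qM \<noteq> qhalt M" "qM = qquery M"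
  shows "run M \<phi> a (Suc m) = (qans M, tsM[1 := (encode (\<phi> (content (tsM ! 2))), 0)])"
  using assms by (simp add: run_Suc step_def Let_def)

lemma lrev_Suc_no_query:
  assumes "fst (run M \<phi> a m) \<noteq> qhalt M" "fst (run M \<phi> a m) \<noteq> qquery M"
  shows "lrev M \<phi> a (Suc m) = lrev M \<phi> a m"
proof -
  obtain qM tsM where c: "run M \<phi> a m = (qM, tsM)" by (cases "run M \<phi> a m")
  have l: "length tsM = tM" using run_M_wf[of \<phi> a m] c by simp
  have "fst (snd (run M \<phi> a (Suc m)) ! 1) = fst (tsM ! 1)"
    using run_M_Suc_delta[OF c] assms c l ntapes_M_ge by (simp add: act_def)
  then have "content (snd (run M \<phi> a (Suc m)) ! 1) = content (snd (run M \<phi> a m) ! 1)"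
    using c by (simp add: content_def)
  then show ?thesis using answer_length_le_lrev[of M \<phi> a m] by (simp add: lrev.simps(2))
qed

lemma lrev_image_Suc_eq: "lrev M \<phi> a (Suc m) = lrev M \<phi> a m \<Longrightarrow> lrev M \<phi> a ` {..Suc m} = lrev M \<phi> a ` {..m}"
  by (auto simp: atMost_Suc)

lemma lrev_image_Suc_new: "lrev M \<phi> a m0 < lrev M \<phi> a (Suc m0) \<Longrightarrow>
   card (lrev M \<phi> a ` {..Suc m0}) = Suc (card (lrev M \<phi> a ` {..m0}))"
proof -
  assume lt: "lrev M \<phi> a m0 < lrev M \<phi> a (Suc m0)"
  have "lrev M \<phi> a (Suc m0) \<notin> lrev M \<phi> a ` {..m0}"
    using lrev_mono[of _ m0 M \<phi> a] lt by (auto simp: not_le[symmetric])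
  then show ?thesis by (simp add: atMost_Suc)
qed

lemma card_lrev_image_Suc_le: "card (lrev M \<phi> a ` {..Suc m0}) \<le> Suc (card (lrev M \<phi> a ` {..m0}))"
  by (simp add: atMost_Suc card_insert_le_m1)

definition counter_inv :: "tape list \<Rightarrow> nat \<Rightarrow> bool" where
  "counter_inv ts r \<longleftrightarrow> r \<le> Nc \<and> (\<forall>j<Nc. snd (ts ! iCount j) = 0 \<and> (fst (ts ! iCount j) 0 = S1 \<longleftrightarrow> j < r))"

definition clock_inv :: "tape list \<Rightarrow> nat \<Rightarrow> bool" where
  "clock_inv ts L \<longleftrightarrow> 1 \<le> L \<and> (\<forall>i<K. fst (ts ! iClock i) = ruler L \<and> snd (ts ! iClock i) \<le> L \<and> snd (ts ! iDir i) = 0)"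

(* Digit i is read from the right end of the ruler when its direction tape holds S1, so that
   incrementing the clock moves a single head by one cell and reverses the lower directions. *)
definition clock_value :: "tape list \<Rightarrow> nat \<Rightarrow> nat" where
  "clock_value ts L = (\<Sum>i<K. (if fst (ts ! iDir i) 0 = S1 then L - snd (ts ! iClock i) else snd (ts ! iClock i)) * (L+1)^i)"

definition agrees :: "tape list \<Rightarrow> tape list \<Rightarrow> bool" where
  "agrees ts us \<longleftrightarrow> (\<forall>i<tM. ts ! i = us ! i)"

definition agrees_but_answer :: "tape list \<Rightarrow> tape list \<Rightarrow> nat \<Rightarrow> bool" where
  "agrees_but_answer ts us h \<longleftrightarrow> (\<forall>i<tM. i \<noteq> 1 \<longrightarrow> ts ! i = us ! i) \<and> ts ! 1 = (fst (us ! 1), h)"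

(* A step of M, including the measurement of an oracle answer, costs N at most tick_cost L steps;
   a whole phase between two length revisions costs at most phase_cost L. *)
definition clock_max :: "nat \<Rightarrow> nat" where "clock_max L = (L+1)^K - 1"

definition tick_cost :: "nat \<Rightarrow> nat" where "tick_cost L = 2*L+3"

definition overhead :: "nat \<Rightarrow> nat" where "overhead L = (K+4)*L+10"

definition phase_cost :: "nat \<Rightarrow> nat" where "phase_cost L = clock_max L * tick_cost L + overhead L"

definition inv_init :: "str \<Rightarrow> nat \<Rightarrow> nat \<Rightarrow> tape list \<Rightarrow> bool" where
  "inv_init a n m ts \<longleftrightarrow> n = 0 \<and> m = 0 \<and> ts ! 0 = (encode a, 0) \<and> (\<forall>x. 0 < x \<and> x < nt \<longrightarrow> ts ! x = blank_tape)"

definition init_tapes :: "tape list \<Rightarrow> (nat \<Rightarrow> sym) \<Rightarrow> nat \<Rightarrow> bool" where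
  "init_tapes ts R h \<longleftrightarrow> (\<forall>x. 0 < x \<and> x < tM \<longrightarrow> ts ! x = blank_tape) \<and> ts ! iRuler = (R, h)
     \<and> (\<forall>i<K. ts ! iClock i = (R, h) \<and> ts ! iDir i = blank_tape) \<and> (\<forall>j<Nc. ts ! iCount j = blank_tape)"

definition inv_copy :: "str \<Rightarrow> nat \<Rightarrow> nat \<Rightarrow> tape list \<Rightarrow> bool" where
  "inv_copy a n m ts \<longleftrightarrow> m = 0 \<and> (\<exists>p. p \<le> length a \<and> n = Suc p \<and> ts ! 0 = (encode a, p)
     \<and> init_tapes ts (ruler (Suc p)) (Suc p))"

definition inv_init_rewind :: "str \<Rightarrow> nat \<Rightarrow> nat \<Rightarrow> tape list \<Rightarrow> bool" where
  "inv_init_rewind a n m ts \<longleftrightarrow> m = 0 \<and> (\<exists>h. h \<le> Suc (length a) \<and> n + h = 2 * length a + 3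
     \<and> ts ! 0 = (encode a, h - 1) \<and> init_tapes ts (ruler (Suc (length a))) h)"

definition inv_sim :: "strfun \<Rightarrow> str \<Rightarrow> nat \<Rightarrow> nat \<Rightarrow> nat \<Rightarrow> tape list \<Rightarrow> bool" where
  "inv_sim \<phi> a n m q ts \<longleftrightarrow> fst (run M \<phi> a m) \<noteq> qhalt M \<and> q = sim_state (fst (run M \<phi> a m))
     \<and> agrees ts (snd (run M \<phi> a m)) \<and> ts ! iRuler = (ruler (Suc (lrev M \<phi> a m)), 0)
     \<and> clock_inv ts (Suc (lrev M \<phi> a m)) \<and> clock_value ts (Suc (lrev M \<phi> a m)) \<le> m
     \<and> (\<exists>r. counter_inv ts r \<and> card (lrev M \<phi> a ` {..m}) = Suc r
          \<and> n \<le> r * phase_cost (Suc (lrev M \<phi> a m)) + overhead (Suc (lrev M \<phi> a m)) + clock_value ts (Suc (lrev M \<phi> a m)) * tick_cost (Suc (lrev M \<phi> a m)))"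

definition inv_halt :: "strfun \<Rightarrow> str \<Rightarrow> nat \<Rightarrow> tape list \<Rightarrow> bool" where
  "inv_halt \<phi> a m ts \<longleftrightarrow> agrees ts (snd (run M \<phi> a m)) \<and> (fst (run M \<phi> a m) = qhalt M \<or> \<phi> \<notin> A)
     \<and> card (lrev M \<phi> a ` {..m}) \<le> Nc + 2"

definition answered :: "strfun \<Rightarrow> str \<Rightarrow> nat \<Rightarrow> nat \<Rightarrow> str \<Rightarrow> nat \<Rightarrow> tape list \<Rightarrow> bool" where
  "answered \<phi> a m m0 b r ts \<longleftrightarrow> m = Suc m0 \<and> fst (run M \<phi> a m0) = qquery M \<and> qquery M \<noteq> qhalt M
     \<and> fst (run M \<phi> a m) = qans M \<and> snd (run M \<phi> a m) ! 1 = (encode b, 0)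
     \<and> lrev M \<phi> a m = max (lrev M \<phi> a m0) (length b) \<and> clock_inv ts (Suc (lrev M \<phi> a m0))
     \<and> clock_value ts (Suc (lrev M \<phi> a m0)) < m \<and> counter_inv ts r \<and> card (lrev M \<phi> a ` {..m0}) = Suc r"

definition budget :: "tape list \<Rightarrow> nat \<Rightarrow> nat \<Rightarrow> nat" where
  "budget ts r o0 = r * phase_cost (Suc o0) + overhead (Suc o0) + clock_value ts (Suc o0) * tick_cost (Suc o0)"

definition budget_ext :: "nat \<Rightarrow> nat \<Rightarrow> nat" where
  "budget_ext r lb = r * phase_cost (Suc lb) + overhead (Suc lb) + clock_max (Suc lb) * tick_cost (Suc lb)"

definition budget_sync :: "nat \<Rightarrow> nat \<Rightarrow> nat" where
  "budget_sync r L = (r - 1) * phase_cost L + overhead L + clock_max L * tick_cost L"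

definition inv_answer :: "strfun \<Rightarrow> str \<Rightarrow> nat \<Rightarrow> nat \<Rightarrow> tape list \<Rightarrow> bool" where
  "inv_answer \<phi> a n m ts \<longleftrightarrow> (\<exists>m0 b r. answered \<phi> a m m0 b r ts \<and> agrees_but_answer ts (snd (run M \<phi> a m)) 0
     \<and> ts ! iRuler = (ruler (Suc (lrev M \<phi> a m0)), 0) \<and> n \<le> budget ts r (lrev M \<phi> a m0) + 1)"

definition inv_scan :: "strfun \<Rightarrow> str \<Rightarrow> nat \<Rightarrow> nat \<Rightarrow> tape list \<Rightarrow> bool" where
  "inv_scan \<phi> a n m ts \<longleftrightarrow> (\<exists>m0 b r p. answered \<phi> a m m0 b r ts \<and> p \<le> length b \<and> p \<le> lrev M \<phi> a m0
     \<and> agrees_but_answer ts (snd (run M \<phi> a m)) p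
     \<and> ts ! iRuler = (ruler (Suc (lrev M \<phi> a m0)), Suc p) \<and> n \<le> budget ts r (lrev M \<phi> a m0) + 2 + p)"

definition inv_rewind :: "strfun \<Rightarrow> str \<Rightarrow> nat \<Rightarrow> nat \<Rightarrow> tape list \<Rightarrow> bool" where
  "inv_rewind \<phi> a n m ts \<longleftrightarrow> (\<exists>m0 b r h. answered \<phi> a m m0 b r ts \<and> length b \<le> lrev M \<phi> a m0
     \<and> h \<le> Suc (length b) \<and> agrees_but_answer ts (snd (run M \<phi> a m)) (h - 1)
     \<and> ts ! iRuler = (ruler (Suc (lrev M \<phi> a m0)), h) \<and> n + h \<le> budget ts r (lrev M \<phi> a m0) + 4 + 2 * length b)"

definition inv_scan_ext :: "strfun \<Rightarrow> str \<Rightarrow> nat \<Rightarrow> nat \<Rightarrow> tape list \<Rightarrow> bool" where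
  "inv_scan_ext \<phi> a n m ts \<longleftrightarrow> (\<exists>m0 b r p. answered \<phi> a m m0 b r ts \<and> lrev M \<phi> a m0 < p \<and> p \<le> length b
     \<and> agrees_but_answer ts (snd (run M \<phi> a m)) p
     \<and> ts ! iRuler = (ruler (Suc p), Suc p) \<and> n \<le> budget_ext r (length b) + 2 + p)"

definition inv_rewind_ext :: "strfun \<Rightarrow> str \<Rightarrow> nat \<Rightarrow> nat \<Rightarrow> tape list \<Rightarrow> bool" where
  "inv_rewind_ext \<phi> a n m ts \<longleftrightarrow> (\<exists>m0 b r h. answered \<phi> a m m0 b r ts \<and> lrev M \<phi> a m0 < length b
     \<and> h \<le> Suc (length b) \<and> agrees_but_answer ts (snd (run M \<phi> a m)) (h - 1)
     \<and> ts ! iRuler = (ruler (Suc (length b)), h) \<and> n + h \<le> budget_ext r (length b) + 4 + 2 * length b)"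

definition sync_phase :: "strfun \<Rightarrow> str \<Rightarrow> nat \<Rightarrow> nat \<Rightarrow> tape list \<Rightarrow> bool" where
  "sync_phase \<phi> a m r ts \<longleftrightarrow> fst (run M \<phi> a m) = qans M \<and> agrees ts (snd (run M \<phi> a m))
     \<and> (\<forall>i<K. snd (ts ! iDir i) = 0 \<and> fst (ts ! iDir i) 0 = S0) \<and> counter_inv ts r \<and> 1 \<le> r
     \<and> card (lrev M \<phi> a ` {..m}) = Suc r"

definition inv_sync1 :: "strfun \<Rightarrow> str \<Rightarrow> nat \<Rightarrow> nat \<Rightarrow> tape list \<Rightarrow> bool" where
  "inv_sync1 \<phi> a n m ts \<longleftrightarrow> (\<exists>r Lo L. L = Suc (lrev M \<phi> a m) \<and> sync_phase \<phi> a m r ts \<and> ts ! iRuler = (ruler L, 0)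
     \<and> 1 \<le> Lo \<and> Lo \<le> L \<and> (\<forall>i<K. fst (ts ! iClock i) = ruler Lo \<and> snd (ts ! iClock i) \<le> Lo)
     \<and> n + (\<Sum>i<K. snd (ts ! iClock i)) \<le> budget_sync r L + 2 * L + 3 + K * L)"

definition inv_sync2 :: "strfun \<Rightarrow> str \<Rightarrow> nat \<Rightarrow> nat \<Rightarrow> tape list \<Rightarrow> bool" where
  "inv_sync2 \<phi> a n m ts \<longleftrightarrow> (\<exists>r Lo L h. L = Suc (lrev M \<phi> a m) \<and> sync_phase \<phi> a m r ts \<and> h \<le> L
     \<and> ts ! iRuler = (ruler L, h) \<and> 1 \<le> Lo \<and> Lo \<le> L \<and> (\<forall>i<K. ts ! iClock i = (ruler_mix L Lo h, h))
     \<and> n \<le> budget_sync r L + 2 * L + 4 + K * L + h)"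

definition inv_sync3 :: "strfun \<Rightarrow> str \<Rightarrow> nat \<Rightarrow> nat \<Rightarrow> tape list \<Rightarrow> bool" where
  "inv_sync3 \<phi> a n m ts \<longleftrightarrow> (\<exists>r L h. L = Suc (lrev M \<phi> a m) \<and> sync_phase \<phi> a m r ts \<and> h \<le> L
     \<and> ts ! iRuler = (ruler L, h) \<and> (\<forall>i<K. ts ! iClock i = (ruler L, h))
     \<and> n + h \<le> budget_sync r L + 4 * L + 5 + K * L)"

definition mode_inv :: "strfun \<Rightarrow> str \<Rightarrow> nat \<Rightarrow> nat \<Rightarrow> nat \<Rightarrow> tape list \<Rightarrow> bool" where
  "mode_inv \<phi> a n m q ts \<longleftrightarrow>
     (q = INIT \<and> inv_init a n m ts) \<or> (q = COPY \<and> inv_copy a n m ts) \<or> (q = INIT_REWIND \<and> inv_init_rewind a n m ts)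
   \<or> ((q < nstates M \<or> q = QRY) \<and> inv_sim \<phi> a n m q ts) \<or> (q = HALT \<and> inv_halt \<phi> a m ts)
   \<or> (q = ANSWER \<and> inv_answer \<phi> a n m ts) \<or> (q = SCAN \<and> inv_scan \<phi> a n m ts) \<or> (q = REWIND \<and> inv_rewind \<phi> a n m ts)
   \<or> (q = SCAN_EXT \<and> inv_scan_ext \<phi> a n m ts) \<or> (q = REWIND_EXT \<and> inv_rewind_ext \<phi> a n m ts)
   \<or> (q = SYNC1 \<and> inv_sync1 \<phi> a n m ts) \<or> (q = SYNC2 \<and> inv_sync2 \<phi> a n m ts) \<or> (q = SYNC3 \<and> inv_sync3 \<phi> a n m ts)"

definition sim_inv :: "strfun \<Rightarrow> str \<Rightarrow> nat \<Rightarrow> nat \<Rightarrow> config \<Rightarrow> bool" where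
  "sim_inv \<phi> a n l c \<longleftrightarrow> length (snd c) = nt \<and> (\<exists>m. l = lrev M \<phi> a m \<and> mode_inv \<phi> a n m (fst c) (snd c))"

abbreviation next_inv :: "strfun \<Rightarrow> str \<Rightarrow> nat \<Rightarrow> nat \<Rightarrow> config \<Rightarrow> bool" where
  "next_inv \<phi> a n m c \<equiv> sim_inv \<phi> a (Suc n) (max (lrev M \<phi> a m) (length (content (snd c ! 1)))) c"

lemma answer_length_bound: "fst (ts ! 1) = fst (snd (run M \<phi> a m) ! 1) \<Longrightarrow> length (content (ts ! 1)) \<le> lrev M \<phi> a m"
  using answer_length_le_lrev[of M \<phi> a m] content_fst_cong[of "ts ! 1" "snd (run M \<phi> a m) ! 1"] by simp

lemma sim_invI: "length ts = nt \<Longrightarrow> mode_inv \<phi> a n m q ts \<Longrightarrow> l = lrev M \<phi> a m \<Longrightarrow> sim_inv \<phi> a n l (q, ts)"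
  by (auto simp: sim_inv_def)

lemma init_tapes_answer: "init_tapes ts R h \<Longrightarrow> ts ! 1 = blank_tape"
  using ntapes_M_ge by (simp add: init_tapes_def)

lemma init_tapes_step:
  assumes I: "init_tapes ts R h"
    and new: "\<And>x. x < nt \<Longrightarrow> ts' ! x = act x (ts!x) (g x)"
    and kept: "\<And>x. x < nt \<Longrightarrow> g x = keep (heads ts) x \<Longrightarrow> ts' ! x = ts ! x"
    and moved: "\<And>x. x = iRuler \<or> isClock x \<Longrightarrow> g x = (w, d)"
    and others: "\<And>x. 0 < x \<Longrightarrow> x \<noteq> iRuler \<Longrightarrow> \<not> isClock x \<Longrightarrow> g x = keep (heads ts) x"
  shows "init_tapes ts' (R(h := w)) (mv d h)"
proof -
  have move: "ts' ! x = (R(h := w), mv d h)" if "ts ! x = (R, h)" "x = iRuler \<or> isClock x" "x < nt" for x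
    using new[OF that(3)] moved[OF that(2)] that(1,2) ntapes_M_ge by (auto simp: act_hi)
  have same: "ts' ! x = ts ! x" if "0 < x" "x \<noteq> iRuler" "\<not> isClock x" "x < nt" for x
    using kept others that by simp
  show ?thesis using I unfolding init_tapes_def
    by (auto simp: move same)
qed

lemma step_count_M: "\<phi> \<in> A \<Longrightarrow> \<not> halted_at M \<phi> a m \<Longrightarrow> Suc m \<le> t (lrev M \<phi> a (Suc m))"
proof -
  assume "\<phi> \<in> A" "\<not> halted_at M \<phi> a m"
  then show ?thesis using scM time_ge_Suc[of M \<phi> a m] unfolding step_count_def by (metis lrev.simps(2))
qed

lemma t_le_clock_max: "t x \<le> clock_max (Suc x)"
proof -
  have a: "t x < (x+2)^K" using tK by simp
  have "clock_max (Suc x) = (x+2)^K - 1" by (simp add: clock_max_def)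
  then show ?thesis using a by linarith
qed

lemma clock_inv_positions_sum_le: "clock_inv ts L \<Longrightarrow> (\<Sum>i<K. snd (ts ! iClock i)) \<le> K * L"
  using sum_mono[of "{..<K}" "\<lambda>i. snd (ts ! iClock i)" "\<lambda>_. L"] by (simp add: clock_inv_def)

lemma clock_value_le_max: "clock_inv ts L \<Longrightarrow> clock_value ts L \<le> clock_max L"
proof -
  assume R: "clock_inv ts L"
  let ?v = "\<lambda>i. (if fst (ts ! iDir i) 0 = S1 then L - snd (ts ! iClock i) else snd (ts ! iClock i))"
  have "\<forall>i<K. ?v i \<le> L" using R by (auto simp: clock_inv_def)
  from digits_value_le[OF this] show ?thesis by (simp add: clock_value_def clock_max_def)
qed

lemma digit_done_iff:
  assumes len: "length ts = nt" and R: "clock_inv ts L" and i: "i < K"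
  shows "digit_done (heads ts) i \<longleftrightarrow>
    (if fst (ts ! iDir i) 0 = S1 then L - snd (ts ! iClock i) else snd (ts ! iClock i)) = L"
proof -
  from R i have L: "1 \<le> L" and f: "fst (ts ! iClock i) = ruler L" and p: "snd (ts ! iClock i) \<le> L"
    and dh: "snd (ts ! iDir i) = 0" by (auto simp: clock_inv_def)
  have r1: "heads ts ! iClock i = ruler L (snd (ts ! iClock i))" using len i f by simp
  have r2: "heads ts ! iDir i = fst (ts ! iDir i) 0" using len i dh by simp
  show ?thesis using r1 r2 p L
    by (auto simp: digit_done_def counts_down_def ruler_S0_iff ruler_Blank_iff)
qed

lemma clock_expired_value:
  assumes len: "length ts = nt" and R: "clock_inv ts L" and E: "clock_expired (heads ts)"
  shows "clock_value ts L = clock_max L"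
proof -
  have "\<forall>i<K. (if fst (ts ! iDir i) 0 = S1 then L - snd (ts ! iClock i) else snd (ts ! iClock i)) = L"
    using E digit_done_iff[OF len R] by (auto simp: clock_expired_def)
  from digits_value_max[OF this] show ?thesis by (simp add: clock_value_def clock_max_def)
qed

lemma clock_tick:
  assumes len: "length ts = nt" and R: "clock_inv ts L" and E: "\<not> clock_expired (heads ts)"
    and g: "\<And>x. x < nt \<Longrightarrow> isClock x \<or> isDir x \<Longrightarrow> g x = tick_act (heads ts) x"
    and new: "\<And>x. x < nt \<Longrightarrow> ts' ! x = act x (ts!x) (g x)"
  shows "clock_inv ts' L \<and> clock_value ts' L = Suc (clock_value ts L)"
proof -
  define ss where "ss = heads ts"
  define p where "p i = snd (ts ! iClock i)" for i
  define d where "d i = (fst (ts ! iDir i) 0 = S1)" for i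
  define v where "v i = (if d i then L - p i else p i)" for i
  have L: "1 \<le> L" using R by (simp add: clock_inv_def)
  have f: "\<And>i. i < K \<Longrightarrow> fst (ts ! iClock i) = ruler L" "\<And>i. i < K \<Longrightarrow> p i \<le> L"
    "\<And>i. i < K \<Longrightarrow> snd (ts ! iDir i) = 0" using R by (auto simp: clock_inv_def p_def)
  have ae: "\<And>i. i < K \<Longrightarrow> digit_done ss i \<longleftrightarrow> v i = L"
    using digit_done_iff[OF len R] by (simp add: ss_def v_def d_def p_def)
  have ssR: "\<And>i. i < K \<Longrightarrow> ss ! iClock i = ruler L (p i)" using len f by (simp add: ss_def p_def)
  have ssD: "\<And>i. i < K \<Longrightarrow> counts_down ss i = d i" using len f by (simp add: ss_def d_def counts_down_def)
  define j where "j = least_live_digit ss"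
  have ex: "\<exists>i. i < K \<and> \<not> digit_done ss i" using E by (auto simp: clock_expired_def ss_def)
  have j: "j < K" "\<not> digit_done ss j" using LeastI_ex[OF ex] by (auto simp: j_def least_live_digit_def)
  have jm: "\<And>i. i < j \<Longrightarrow> digit_done ss i" using not_less_Least j(1) by (fastforce simp: j_def least_live_digit_def)
  define p' where "p' i = (if i = j then (if d j then p j - 1 else Suc (p j)) else p i)" for i
  define d' where "d' i = (if i < j then \<not> d i else d i)" for i
  have tR: "\<And>i. i < K \<Longrightarrow> ts' ! iClock i = (ruler L, p' i)"
  proof -
    fix i assume i: "i < K"
    have "ts' ! iClock i = act (iClock i) (ts ! iClock i) (tick_act ss (iClock i))" using new[of "iClock i"] g[of "iClock i"] i by (simp add: ss_def)
    also have "\<dots> = (ruler L, p' i)"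
      using i f[of i] ssR[of i] ssD[of i] ssD[of j] j(1) len ntapes_M_ge
      by (cases "ts ! iClock i") (auto simp: tick_act_def j_def keep_def act_hi p_def p'_def ss_def)
    finally show "ts' ! iClock i = \<dots>" .
  qed
  have tD: "\<And>i. i < K \<Longrightarrow> snd (ts' ! iDir i) = 0 \<and> (fst (ts' ! iDir i) 0 = S1 \<longleftrightarrow> d' i)"
  proof -
    fix i assume i: "i < K"
    have "ts' ! iDir i = act (iDir i) (ts ! iDir i) (tick_act ss (iDir i))" using new[of "iDir i"] g[of "iDir i"] i by (simp add: ss_def)
    then show "snd (ts' ! iDir i) = 0 \<and> (fst (ts' ! iDir i) 0 = S1 \<longleftrightarrow> d' i)"
      using i f(3)[of i] ssD[of i] len ntapes_M_ge
      by (cases "ts ! iDir i") (auto simp: tick_act_def j_def keep_def act_hi d_def d'_def ss_def)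
  qed
  have vj: "v j \<noteq> L" using ae j by auto
  have low: "\<forall>i<j. v i = L" using jm ae j(1) by auto
  note digits = reflected_digits_increment[OF j(1) _ vj[unfolded v_def] low[unfolded v_def] p'_def d'_def]
  have "clock_value ts' L = (\<Sum>i<K. (if d' i then L - p' i else p' i) * (L+1)^i)"
    unfolding clock_value_def using tR tD by (intro sum.cong) auto
  also have "\<dots> = Suc (clock_value ts L)"
    unfolding clock_value_def p_def[symmetric] d_def[symmetric] using digits(1) f(2) by simp
  finally have "clock_value ts' L = Suc (clock_value ts L)" .
  moreover have "clock_inv ts' L"
    unfolding clock_inv_def using L tR tD digits(2) f(2) by (auto simp: p'_def)
  ultimately show ?thesis by simp
qed

lemma counter_inv_cong: "(\<forall>j<Nc. ts' ! iCount j = ts ! iCount j) \<Longrightarrow> counter_inv ts' r \<longleftrightarrow> counter_inv ts r"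
  by (simp add: counter_inv_def)

lemma clock_inv_cong: "(\<forall>i<K. ts' ! iClock i = ts ! iClock i \<and> ts' ! iDir i = ts ! iDir i) \<Longrightarrow> clock_inv ts' L \<longleftrightarrow> clock_inv ts L"
  by (simp add: clock_inv_def)

lemma clock_value_cong: "(\<forall>i<K. ts' ! iClock i = ts ! iClock i \<and> ts' ! iDir i = ts ! iDir i) \<Longrightarrow> clock_value ts' L = clock_value ts L"
  unfolding clock_value_def by (intro sum.cong) auto

lemma clock_max_mono: "L \<le> L' \<Longrightarrow> clock_max L \<le> clock_max L'"
  unfolding clock_max_def by (intro diff_le_mono power_mono) auto

lemma tick_cost_mono: "L \<le> L' \<Longrightarrow> tick_cost L \<le> tick_cost L'" by (simp add: tick_cost_def)

lemma overhead_mono: "L \<le> L' \<Longrightarrow> overhead L \<le> overhead L'" by (simp add: overhead_def)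

lemma phase_cost_mono: "L \<le> L' \<Longrightarrow> phase_cost L \<le> phase_cost L'"
  unfolding phase_cost_def by (intro add_mono mult_le_mono clock_max_mono tick_cost_mono overhead_mono)

lemma budget_le_budget_ext: "clock_inv ts (Suc o0) \<Longrightarrow> o0 \<le> lb \<Longrightarrow> budget ts r o0 \<le> budget_ext r lb"
proof -
  assume R: "clock_inv ts (Suc o0)" and le: "o0 \<le> lb"
  have "clock_value ts (Suc o0) \<le> clock_max (Suc lb)" using clock_value_le_max[OF R] clock_max_mono[of "Suc o0" "Suc lb"] le by simp
  then show ?thesis unfolding budget_def budget_ext_def using le
    by (intro add_mono mult_le_mono phase_cost_mono overhead_mono tick_cost_mono) auto
qed

lemma answered_cong: "(\<forall>i<K. ts' ! iClock i = ts ! iClock i \<and> ts' ! iDir i = ts ! iDir i) \<Longrightarrow> (\<forall>j<Nc. ts' ! iCount j = ts ! iCount j) \<Longrightarrow>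
   answered \<phi> a m m0 b r ts' \<longleftrightarrow> answered \<phi> a m m0 b r ts"
  unfolding answered_def using clock_inv_cong[of ts' ts] clock_value_cong[of ts' ts] counter_inv_cong[of ts' ts] by simp

lemma budget_cong: "(\<forall>i<K. ts' ! iClock i = ts ! iClock i \<and> ts' ! iDir i = ts ! iDir i) \<Longrightarrow> budget ts' r o0 = budget ts r o0"
  unfolding budget_def using clock_value_cong[of ts' ts] by simp

lemma agrees_but_answer_update: "agrees_but_answer ts us h \<Longrightarrow> (\<forall>i<tM. i \<noteq> 1 \<longrightarrow> ts' ! i = ts ! i) \<Longrightarrow> ts' ! 1 = (fst (ts ! 1), h') \<Longrightarrow> agrees_but_answer ts' us h'"
  by (simp add: agrees_but_answer_def)

lemma answered_answer_tape: "answered \<phi> a m m0 b r ts \<Longrightarrow> agrees_but_answer ts (snd (run M \<phi> a m)) h \<Longrightarrow> ts ! 1 = (encode b, h)"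
  unfolding answered_def agrees_but_answer_def by (metis fst_conv)

lemma agrees_but_answer_0: "agrees_but_answer ts us 0 \<Longrightarrow> snd (us ! 1) = 0 \<Longrightarrow> agrees ts us"
  unfolding agrees_but_answer_def agrees_def by (metis prod.collapse)

lemma sync_phase_cong: "(\<forall>i<tM. ts' ! i = ts ! i) \<Longrightarrow> (\<forall>i<K. ts' ! iDir i = ts ! iDir i) \<Longrightarrow> (\<forall>j<Nc. ts' ! iCount j = ts ! iCount j) \<Longrightarrow>
   sync_phase \<phi> a m r ts' \<longleftrightarrow> sync_phase \<phi> a m r ts"
  unfolding sync_phase_def agrees_def using counter_inv_cong[of ts' ts] by simp

lemma agrees_cong: "agrees ts us \<Longrightarrow> (\<And>i. i < tM \<Longrightarrow> ts' ! i = ts ! i) \<Longrightarrow> agrees ts' us"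
  by (simp add: agrees_def)

lemma sync_phase_answer_bound: "sync_phase \<phi> a m r ts \<Longrightarrow> length (content (ts ! 1)) \<le> lrev M \<phi> a m"
  using answer_length_bound[of ts \<phi> a m] ntapes_M_ge by (simp add: sync_phase_def agrees_def)

lemma ruler_mix_0: "ruler_mix L Lo 0 = ruler Lo" by (simp add: ruler_mix_def fun_eq_iff)

lemma ruler_mix_full: "Lo \<le> L \<Longrightarrow> ruler_mix L Lo L = ruler L" by (auto simp: ruler_mix_def fun_eq_iff ruler_def)

lemma ruler_mix_Suc: "(ruler_mix L Lo h)(h := ruler L h) = ruler_mix L Lo (Suc h)" by (auto simp: ruler_mix_def fun_eq_iff)

lemma clock_expired_not_in_A:
  assumes "length ts = nt" and "clock_inv ts (Suc (lrev M \<phi> a (Suc m)))" and "clock_expired (heads ts)"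
    and "\<not> halted_at M \<phi> a m" and "clock_value ts (Suc (lrev M \<phi> a (Suc m))) \<le> m"
  shows "\<phi> \<notin> A"
proof
  assume A: "\<phi> \<in> A"
  have "Suc m \<le> t (lrev M \<phi> a (Suc m))" by (rule step_count_M[OF A assms(4)])
  also have "\<dots> \<le> clock_max (Suc (lrev M \<phi> a (Suc m)))" by (rule t_le_clock_max)
  also have "\<dots> = clock_value ts (Suc (lrev M \<phi> a (Suc m)))"
    using clock_expired_value[OF assms(1-3)] by simp
  finally show False using assms(5) by simp
qed

lemma too_many_revisions_not_in_A:
  assumes "Nc < card (lrev M \<phi> a ` {..m})"
  shows "\<phi> \<notin> A"
proof
  assume "\<phi> \<in> A"
  then have "finite (range (lrev M \<phi> a))" and "card (range (lrev M \<phi> a)) \<le> Nc" using flrM by auto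
  moreover have "card (lrev M \<phi> a ` {..m}) \<le> card (range (lrev M \<phi> a))"
    using calculation(1) by (rule card_mono) auto
  ultimately show False using assms by simp
qed

lemma mode_inv_sim_state:
  assumes meq: "agrees ts (snd (run M \<phi> a m))"
    and "ts ! iRuler = (ruler (Suc (lrev M \<phi> a m)), 0)"
    and "clock_inv ts (Suc (lrev M \<phi> a m))" and "clock_value ts (Suc (lrev M \<phi> a m)) \<le> m"
    and cok: "counter_inv ts r" and card: "card (lrev M \<phi> a ` {..m}) = Suc r"
    and "n \<le> r * phase_cost (Suc (lrev M \<phi> a m)) + overhead (Suc (lrev M \<phi> a m))
                + clock_value ts (Suc (lrev M \<phi> a m)) * tick_cost (Suc (lrev M \<phi> a m))"
  shows "mode_inv \<phi> a n m (sim_state (fst (run M \<phi> a m))) ts"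
proof (cases "fst (run M \<phi> a m) = qhalt M")
  case True
  then have "inv_halt \<phi> a m ts" using meq card cok by (simp add: inv_halt_def counter_inv_def)
  then show ?thesis using True by (simp add: mode_inv_def sim_state_def)
next
  case False
  have "sim_state (fst (run M \<phi> a m)) < nstates M \<or> sim_state (fst (run M \<phi> a m)) = QRY"
    using run_M_wf(1)[of \<phi> a m] False by (simp add: sim_state_def)
  moreover have "inv_sim \<phi> a n m (sim_state (fst (run M \<phi> a m))) ts"
    unfolding inv_sim_def using False assms by blast
  ultimately show ?thesis by (auto simp: mode_inv_def)
qed

lemma answered_move:
  assumes pw: "answered \<phi> a m m0 b r ts" and meq1: "agrees_but_answer ts (snd (run M \<phi> a m)) h"
    and same: "\<And>x. x < nt \<Longrightarrow> x \<noteq> 1 \<Longrightarrow> x \<noteq> iRuler \<Longrightarrow> ts' ! x = ts ! x"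
    and t1: "ts' ! 1 = (fst (ts ! 1), h')"
  shows "answered \<phi> a m m0 b r ts'" and "agrees_but_answer ts' (snd (run M \<phi> a m)) h'"
    and "budget ts' r (lrev M \<phi> a m0) = budget ts r (lrev M \<phi> a m0)"
    and "length (content (ts' ! 1)) \<le> lrev M \<phi> a m"
proof -
  have rdc: "\<forall>i<K. ts' ! iClock i = ts ! iClock i \<and> ts' ! iDir i = ts ! iDir i"
    "\<forall>j<Nc. ts' ! iCount j = ts ! iCount j" using same ntapes_M_ge by auto
  show "answered \<phi> a m m0 b r ts'" using pw answered_cong[OF rdc] by simp
  show "agrees_but_answer ts' (snd (run M \<phi> a m)) h'"
    using agrees_but_answer_update[OF meq1 _ t1] same by simp
  show "budget ts' r (lrev M \<phi> a m0) = budget ts r (lrev M \<phi> a m0)" using budget_cong[OF rdc(1)] .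
  show "length (content (ts' ! 1)) \<le> lrev M \<phi> a m"
    using answer_length_bound[of ts' \<phi> a m] meq1 t1 by (simp add: agrees_but_answer_def)
qed

lemma sim_act_agrees:
  assumes len: "length ts = nt" and c: "run M \<phi> a m = (q, tsM)" and nh: "q \<noteq> qhalt M" "q \<noteq> qquery M"
    and meq: "agrees ts tsM" and new: "\<And>x. x < nt \<Longrightarrow> ts' ! x = act x (ts!x) (sim_act q (heads ts) x)"
  shows "agrees ts' (snd (run M \<phi> a (Suc m)))" and "fst (delta M q (take tM (heads ts))) = fst (run M \<phi> a (Suc m))"
proof -
  have lM: "length tsM = tM" using run_M_wf(2)[of \<phi> a m] c by simp
  have take: "take tM (heads ts) = heads tsM"
    using meq len lM by (intro nth_equalityI) (auto simp: agrees_def)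
  note cM' = run_M_Suc_delta[OF c nh]
  show "fst (delta M q (take tM (heads ts))) = fst (run M \<phi> a (Suc m))" using cM' take by simp
  show "agrees ts' (snd (run M \<phi> a (Suc m)))"
    unfolding agrees_def
  proof (intro allI impI)
    fix i assume i: "i < tM"
    have "ts' ! i = act i (ts ! i) (snd (delta M q (heads tsM)) ! i)" using new[of i] i take by (simp add: sim_act_def)
    then show "ts' ! i = snd (run M \<phi> a (Suc m)) ! i" using meq i cM' by (simp add: agrees_def)
  qed
qed

lemma step_init:
  assumes len: "length ts = nt" and P: "inv_init a n m ts"
  shows "next_inv \<phi> a n m (step N \<phi> (INIT, ts))"
proof -
  from P have n: "n = 0" "m = 0" and t0: "ts ! 0 = (encode a, 0)"
    and tb: "\<And>x. 0 < x \<Longrightarrow> x < nt \<Longrightarrow> ts ! x = blank_tape" by (auto simp: inv_init_def)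
  have I: "init_tapes ts (\<lambda>_. SBlank) 0" using tb ntapes_M_ge by (simp add: init_tapes_def blank_tape_def)
  define ss where "ss = heads ts"
  have d: "deltaN INIT ss = (COPY, acts (init_act ss))" by (simp add: deltaN_def)
  obtain ts' where st: "step N \<phi> (INIT, ts) = (COPY, ts')" and l: "length ts' = nt"
    and new: "\<And>x. x < nt \<Longrightarrow> ts' ! x = act x (ts!x) (init_act ss x)"
    and kept: "\<And>x. x < nt \<Longrightarrow> init_act ss x = keep ss x \<Longrightarrow> ts' ! x = ts ! x"
    by (rule step_N_acts[of _ ts]) (use d len ss_def in auto)
  have "init_tapes ts' ((\<lambda>_. SBlank)(0 := S0)) (mv MvR 0)"
    by (rule init_tapes_step[OF I new[unfolded ss_def] kept[unfolded ss_def]])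
      (use ntapes_M_ge in \<open>auto simp: init_act_def\<close>)
  then have I': "init_tapes ts' (ruler 1) 1" by (simp add: ruler_1)
  have "ts' ! 0 = (encode a, 0)" using kept[of 0] t0 ntapes_M_ge by (simp add: init_act_def)
  then have "inv_copy a (Suc n) m ts'" unfolding inv_copy_def using I' n by auto
  then show ?thesis using st l n init_tapes_answer[OF I'] by (auto simp: mode_inv_def intro!: sim_invI[where m=0])
qed

lemma step_copy:
  assumes len: "length ts = nt" and P: "inv_copy a n m ts"
  shows "next_inv \<phi> a n m (step N \<phi> (COPY, ts))"
proof -
  from P obtain p where m: "m = 0" and p: "p \<le> length a" "n = Suc p" and t0: "ts ! 0 = (encode a, p)"
    and I: "init_tapes ts (ruler (Suc p)) (Suc p)" unfolding inv_copy_def by blast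
  define ss where "ss = heads ts"
  have s0: "ss ! 0 = SBlank \<longleftrightarrow> p = length a" using len t0 p by (auto simp: ss_def encode_blank_iff)
  show ?thesis
  proof (cases "p = length a")
    case True
    then have d: "deltaN COPY ss = (INIT_REWIND, acts (keep ss))" using s0 by (simp add: deltaN_def)
    have st: "step N \<phi> (COPY, ts) = (INIT_REWIND, ts)" by (rule step_N_keep) (use d len ss_def in auto)
    have "inv_init_rewind a (Suc n) 0 ts" unfolding inv_init_rewind_def
      using True p t0 I by (intro conjI exI[of _ "Suc p"]) auto
    then show ?thesis using st len m init_tapes_answer[OF I] by (auto simp: mode_inv_def intro!: sim_invI[where m=0])
  next
    case False
    then have d: "deltaN COPY ss = (COPY, acts (copy_act ss))" using s0 by (simp add: deltaN_def)
    obtain ts' where st: "step N \<phi> (COPY, ts) = (COPY, ts')" and l: "length ts' = nt"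
      and new: "\<And>x. x < nt \<Longrightarrow> ts' ! x = act x (ts!x) (copy_act ss x)"
      and kept: "\<And>x. x < nt \<Longrightarrow> copy_act ss x = keep ss x \<Longrightarrow> ts' ! x = ts ! x"
      by (rule step_N_acts[of _ ts]) (use d len ss_def in auto)
    have "init_tapes ts' ((ruler (Suc p))(Suc p := S1)) (mv MvR (Suc p))"
      by (rule init_tapes_step[OF I new[unfolded ss_def] kept[unfolded ss_def]])
        (use ntapes_M_ge in \<open>auto simp: copy_act_def\<close>)
    then have I': "init_tapes ts' (ruler (Suc (Suc p))) (Suc (Suc p))" by (simp add: ruler_ext)
    have "ts' ! 0 = (encode a, Suc p)" using new[of 0] t0 ntapes_M_ge by (simp add: copy_act_def act_lo)
    then have "inv_copy a (Suc n) m ts'" unfolding inv_copy_def using I' p False m by auto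
    then show ?thesis using st l m init_tapes_answer[OF I'] by (auto simp: mode_inv_def intro!: sim_invI[where m=0])
  qed
qed

lemma step_init_rewind:
  assumes len: "length ts = nt" and P: "inv_init_rewind a n m ts"
  shows "next_inv \<phi> a n m (step N \<phi> (INIT_REWIND, ts))"
proof -
  from P obtain h where m: "m = 0" and h: "h \<le> Suc (length a)" "n + h = 2 * length a + 3"
    and t0: "ts ! 0 = (encode a, h - 1)" and I: "init_tapes ts (ruler (Suc (length a))) h"
    unfolding inv_init_rewind_def by blast
  define ss where "ss = heads ts"
  have sR: "ss ! x = ruler (Suc (length a)) h" if "x = iRuler \<or> isClock x" for x
  proof (cases "x = iRuler")
    case True then show ?thesis using len I by (simp add: ss_def init_tapes_def)
  next
    case False
    define i where "i = x - Suc tM"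
    have "i < K" "x = iClock i" using that False by (auto simp: i_def)
    then show ?thesis using len I by (simp add: ss_def init_tapes_def)
  qed
  note sW = sR[of iRuler, simplified]
  show ?thesis
  proof (cases "h = 0")
    case True
    then have d: "deltaN INIT_REWIND ss = (sim_state (qstart M), acts (keep ss))"
      using sW by (simp add: deltaN_def ruler_def)
    have st: "step N \<phi> (INIT_REWIND, ts) = (sim_state (qstart M), ts)"
      by (rule step_N_keep) (use d len ss_def in auto)
    have meq: "agrees ts (snd (run M \<phi> a 0))"
      using run_M_0 t0 I True unfolding agrees_def init_tapes_def by (metis diff_0_eq_0 gr0I)
    have rok: "clock_inv ts (Suc (length a))" and clock0: "clock_value ts (Suc (length a)) = 0"
      and cok: "counter_inv ts 0"
      using I True by (simp_all add: init_tapes_def clock_inv_def clock_value_def counter_inv_def)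
    have "4 * Suc (length a) \<le> (K+4) * Suc (length a)" by (rule mult_le_mono1) simp
    then have bnd: "Suc n \<le> 0 * phase_cost (Suc (length a)) + overhead (Suc (length a))
        + 0 * tick_cost (Suc (length a))"
      using h True unfolding overhead_def by simp
    have "mode_inv \<phi> a (Suc n) 0 (sim_state (fst (run M \<phi> a 0))) ts"
      by (rule mode_inv_sim_state[where r = 0]) (use meq I True rok clock0 cok bnd in \<open>auto simp: init_tapes_def\<close>)
    then show ?thesis using st len m init_tapes_answer[OF I] run_M_0 by (auto intro!: sim_invI[where m=0])
  next
    case False
    then have d: "deltaN INIT_REWIND ss = (INIT_REWIND, acts (init_rewind_act ss))"
      using sW by (simp add: deltaN_def ruler_def)
    obtain ts' where st: "step N \<phi> (INIT_REWIND, ts) = (INIT_REWIND, ts')" and l: "length ts' = nt"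
      and new: "\<And>x. x < nt \<Longrightarrow> ts' ! x = act x (ts!x) (init_rewind_act ss x)"
      and kept: "\<And>x. x < nt \<Longrightarrow> init_rewind_act ss x = keep ss x \<Longrightarrow> ts' ! x = ts ! x"
      by (rule step_N_acts[of _ ts]) (use d len ss_def in auto)
    have "init_tapes ts' ((ruler (Suc (length a)))(h := ruler (Suc (length a)) h)) (mv MvL h)"
      by (rule init_tapes_step[OF I new[unfolded ss_def] kept[unfolded ss_def]])
        (use sR ntapes_M_ge in \<open>auto simp: init_rewind_act_def ss_def\<close>)
    then have I': "init_tapes ts' (ruler (Suc (length a))) (h - 1)" by simp
    have "ts' ! 0 = (encode a, h - 1 - 1)" using new[of 0] t0 ntapes_M_ge by (simp add: init_rewind_act_def act_lo)
    then have "inv_init_rewind a (Suc n) m ts'" unfolding inv_init_rewind_def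
      using I' h m False by (intro conjI exI[of _ "h - 1"]) auto
    then show ?thesis using st l m init_tapes_answer[OF I'] by (auto simp: mode_inv_def intro!: sim_invI[where m=0])
  qed
qed

lemma step_sim:
  assumes len: "length ts = nt" and q: "q < nstates M" and P: "inv_sim \<phi> a n m q ts"
  shows "next_inv \<phi> a n m (step N \<phi> (q, ts))"
proof -
  obtain qM tsM where c: "run M \<phi> a m = (qM, tsM)" by (cases "run M \<phi> a m")
  define L where "L = Suc (lrev M \<phi> a m)"
  from P c obtain r where nh: "qM \<noteq> qhalt M" and qe: "q = sim_state qM" and meq: "agrees ts tsM"
    and tw: "ts ! iRuler = (ruler L, 0)" and rok: "clock_inv ts L" and mum: "clock_value ts L \<le> m"
    and cok: "counter_inv ts r" and card: "card (lrev M \<phi> a ` {..m}) = Suc r"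
    and bnd: "n \<le> r * phase_cost L + overhead L + clock_value ts L * tick_cost L"
    unfolding inv_sim_def L_def by auto
  have qq: "qM = q" "qM \<noteq> qquery M" using qe q nh by (auto simp: sim_state_def split: if_splits)
  have lr: "lrev M \<phi> a (Suc m) = lrev M \<phi> a m" using lrev_Suc_no_query[of \<phi> a m] c nh qq by simp
  have ans: "length (content (ts ! 1)) \<le> lrev M \<phi> a m"
    using answer_length_bound[of ts \<phi> a m] meq c ntapes_M_ge by (simp add: agrees_def)
  have hq: "q \<noteq> HALT" "q \<noteq> QRY" using q by auto
  define ss where "ss = heads ts"
  show ?thesis
  proof (cases "clock_expired ss")
    case True
    then have d: "deltaN q ss = (HALT, acts (keep ss))" using q by (simp add: deltaN_def)
    have st: "step N \<phi> (q, ts) = (HALT, ts)" by (rule step_N_keep) (use d len ss_def hq in auto)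
    have "\<phi> \<notin> A"
      by (rule clock_expired_not_in_A[where a = a and m = m, OF len _ True[unfolded ss_def]])
        (use rok mum lr nh c in \<open>auto simp: L_def halted_at_def\<close>)
    then have "inv_halt \<phi> a m ts" using meq c card cok by (simp add: inv_halt_def counter_inv_def)
    then show ?thesis using st len ans by (auto simp: mode_inv_def intro!: sim_invI[where m=m])
  next
    case False
    have d: "deltaN q ss = (sim_state (fst (delta M q (take tM ss))), acts (sim_act q ss))"
      using False q by (simp add: deltaN_def)
    obtain ts' where st: "step N \<phi> (q, ts) = (sim_state (fst (delta M q (take tM ss))), ts')"
      and l: "length ts' = nt"
      and new: "\<And>x. x < nt \<Longrightarrow> ts' ! x = act x (ts!x) (sim_act q ss x)"
      and kept: "\<And>x. x < nt \<Longrightarrow> sim_act q ss x = keep ss x \<Longrightarrow> ts' ! x = ts ! x"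
      by (rule step_N_acts[of _ ts]) (use d len ss_def hq in auto)
    note sim = sim_act_agrees[OF len c[unfolded qq(1)] nh[unfolded qq(1)] qq(2)[unfolded qq(1)] meq new[unfolded ss_def]]
    have tick: "clock_inv ts' L \<and> clock_value ts' L = Suc (clock_value ts L)"
      by (rule clock_tick[OF len rok False[unfolded ss_def] _ new]) (auto simp: sim_act_def ss_def)
    have tw': "ts' ! iRuler = (ruler L, 0)" using kept[of iRuler] tw by (simp add: sim_act_def tick_act_def)
    have cok': "counter_inv ts' r" using cok kept by (subst counter_inv_cong) (auto simp: sim_act_def tick_act_def)
    have ans': "content (ts' ! 1) = content (ts ! 1)" using l new ntapes_M_ge by (simp add: content_def act_def)
    have card': "card (lrev M \<phi> a ` {..Suc m}) = Suc r" using card lrev_image_Suc_eq[OF lr] by simp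
    have bnd': "Suc n \<le> r * phase_cost L + overhead L + clock_value ts' L * tick_cost L"
      using bnd tick by (simp add: tick_cost_def)
    have "mode_inv \<phi> a (Suc n) (Suc m) (sim_state (fst (run M \<phi> a (Suc m)))) ts'"
      by (rule mode_inv_sim_state[where r = r]) (use sim(1) tw' tick mum cok' card' bnd' lr in \<open>auto simp: L_def\<close>)
    then show ?thesis using st l ans' ans lr sim(2) by (auto simp: ss_def intro!: sim_invI[where m="Suc m"])
  qed
qed

lemma step_query:
  assumes len: "length ts = nt" and P: "inv_sim \<phi> a n m QRY ts"
  shows "next_inv \<phi> a n m (step N \<phi> (QRY, ts))"
proof -
  obtain qM tsM where c: "run M \<phi> a m = (qM, tsM)" by (cases "run M \<phi> a m")
  define L where "L = Suc (lrev M \<phi> a m)"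
  from P c obtain r where nh: "qM \<noteq> qhalt M" and qe: "QRY = sim_state qM" and meq: "agrees ts tsM"
    and tw: "ts ! iRuler = (ruler L, 0)" and rok: "clock_inv ts L" and mum: "clock_value ts L \<le> m"
    and cok: "counter_inv ts r" and card: "card (lrev M \<phi> a ` {..m}) = Suc r"
    and bnd: "n \<le> r * phase_cost L + overhead L + clock_value ts L * tick_cost L"
    unfolding inv_sim_def L_def by auto
  have lM: "length tsM = tM" using run_M_wf(2)[of \<phi> a m] c by simp
  have qq: "qM = qquery M" using qe nh run_M_wf(1)[of \<phi> a m] c by (auto simp: sim_state_def split: if_splits)
  define b where "b = \<phi> (content (tsM ! 2))"
  have t2: "ts ! 2 = tsM ! 2" using meq ntapes_M_ge by (simp add: agrees_def)
  define ts' where "ts' = ts[1 := (encode b, 0)]"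
  have st: "step N \<phi> (QRY, ts) = (ANSWER, ts')" using step_N_query t2 by (simp add: ts'_def b_def)
  define tsM' where "tsM' = tsM[1 := (encode b, 0)]"
  have cM': "run M \<phi> a (Suc m) = (qans M, tsM')"
    using run_M_Suc_query[OF c nh qq] by (simp add: tsM'_def b_def)
  have l: "length ts' = nt" using len by (simp add: ts'_def)
  have same: "\<And>x. x \<noteq> 1 \<Longrightarrow> ts' ! x = ts ! x" by (simp add: ts'_def)
  have t1: "ts' ! 1 = (encode b, 0)" using len by (simp add: ts'_def)
  have rdc: "\<forall>i<K. ts' ! iClock i = ts ! iClock i \<and> ts' ! iDir i = ts ! iDir i" "\<forall>j<Nc. ts' ! iCount j = ts ! iCount j"
    using same ntapes_M_ge by auto
  have lr: "lrev M \<phi> a (Suc m) = max (lrev M \<phi> a m) (length b)"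
    using cM' lM ntapes_M_ge by (simp add: tsM'_def lrev.simps(2))
  have "answered \<phi> a (Suc m) m b r ts"
    unfolding answered_def using c qq nh cM' lM ntapes_M_ge lr rok mum cok card
    by (auto simp: tsM'_def L_def)
  then have pw: "answered \<phi> a (Suc m) m b r ts'" using answered_cong[OF rdc] by simp
  have meq1: "agrees_but_answer ts' (snd (run M \<phi> a (Suc m))) 0"
    using meq same t1 cM' lM ntapes_M_ge by (auto simp: agrees_but_answer_def agrees_def tsM'_def)
  have "inv_answer \<phi> a (Suc n) (Suc m) ts'"
    unfolding inv_answer_def using pw meq1 same[of iRuler] tw bnd clock_value_cong[OF rdc(1)] ntapes_M_ge
    by (intro exI[of _ m], intro exI[of _ b], intro exI[of _ r]) (simp add: L_def budget_def)
  then show ?thesis using st l t1 lr by (auto simp: mode_inv_def intro!: sim_invI[where m="Suc m"])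
qed

lemma step_halt:
  assumes len: "length ts = nt" and P: "inv_halt \<phi> a m ts"
  shows "next_inv \<phi> a n m (step N \<phi> (HALT, ts))"
proof -
  have "length (content (ts ! 1)) \<le> lrev M \<phi> a m"
    using P answer_length_bound[of ts \<phi> a m] ntapes_M_ge by (simp add: inv_halt_def agrees_def)
  then show ?thesis using P len step_N_halt[of \<phi> ts] by (auto simp: mode_inv_def intro!: sim_invI[where m=m])
qed

lemma step_answer:
  assumes len: "length ts = nt" and P: "inv_answer \<phi> a n m ts"
  shows "next_inv \<phi> a n m (step N \<phi> (ANSWER, ts))"
proof -
  from P obtain m0 b r where pw: "answered \<phi> a m m0 b r ts"
    and meq1: "agrees_but_answer ts (snd (run M \<phi> a m)) 0"
    and tw: "ts ! iRuler = (ruler (Suc (lrev M \<phi> a m0)), 0)" and bnd: "n \<le> budget ts r (lrev M \<phi> a m0) + 1"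
    unfolding inv_answer_def by blast
  define ss where "ss = heads ts"
  have d: "deltaN ANSWER ss = (SCAN, acts (answer_act ss))" by (simp add: deltaN_def)
  obtain ts' where st: "step N \<phi> (ANSWER, ts) = (SCAN, ts')" and l: "length ts' = nt"
    and new: "\<And>x. x < nt \<Longrightarrow> ts' ! x = act x (ts!x) (answer_act ss x)"
    and kept: "\<And>x. x < nt \<Longrightarrow> answer_act ss x = keep ss x \<Longrightarrow> ts' ! x = ts ! x"
    by (rule step_N_acts[of _ ts]) (use d len ss_def in auto)
  have same: "\<And>x. x < nt \<Longrightarrow> x \<noteq> 1 \<Longrightarrow> x \<noteq> iRuler \<Longrightarrow> ts' ! x = ts ! x"
    using kept by (simp add: answer_act_def)
  have t1: "ts' ! 1 = (fst (ts ! 1), 0)"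
    using kept[of 1] meq1 ntapes_M_ge by (simp add: answer_act_def agrees_but_answer_def)
  note moved = answered_move[OF pw meq1 same t1]
  have tw': "ts' ! iRuler = (ruler (Suc (lrev M \<phi> a m0)), 1)"
    using new[of iRuler] tw len ntapes_M_ge by (simp add: answer_act_def act_hi ss_def)
  have "inv_scan \<phi> a (Suc n) m ts'"
    unfolding inv_scan_def
    apply (rule exI[of _ m0], rule exI[of _ b], rule exI[of _ r], rule exI[of _ "0::nat"])
    using moved tw' bnd by simp
  then show ?thesis using st l moved(4) by (auto simp: mode_inv_def intro!: sim_invI[where m=m])
qed

lemma step_scan_advance:
  assumes len: "length ts = nt" and pw: "answered \<phi> a m m0 b r ts"
    and p: "p < length b" "p \<le> lrev M \<phi> a m0" and meq1: "agrees_but_answer ts (snd (run M \<phi> a m)) p"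
    and tw: "ts ! iRuler = (ruler (Suc (lrev M \<phi> a m0)), Suc p)"
    and bnd: "n \<le> budget ts r (lrev M \<phi> a m0) + 2 + p"
  shows "next_inv \<phi> a n m (step N \<phi> (SCAN, ts))"
proof -
  define o0 where "o0 = lrev M \<phi> a m0"
  have t1: "ts ! 1 = (encode b, p)" using answered_answer_tape[OF pw meq1] .
  define ss where "ss = heads ts"
  have s1: "ss ! 1 \<noteq> SBlank" using len t1 p by (simp add: ss_def encode_blank_iff)
  have sW: "ss ! iRuler = SBlank \<longleftrightarrow> o0 \<le> p" using len tw by (simp add: ss_def ruler_Blank_iff o0_def)
  define g where "g = (if o0 \<le> p then extend_act ss else scan_act ss)"
  define q' where "q' = (if o0 \<le> p then SCAN_EXT else SCAN)"
  have d: "deltaN SCAN ss = (q', acts g)" using s1 sW by (simp add: deltaN_def g_def q'_def)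
  obtain ts' where st: "step N \<phi> (SCAN, ts) = (q', ts')" and l: "length ts' = nt"
    and new: "\<And>x. x < nt \<Longrightarrow> ts' ! x = act x (ts!x) (g x)"
    and kept: "\<And>x. x < nt \<Longrightarrow> g x = keep ss x \<Longrightarrow> ts' ! x = ts ! x"
    by (rule step_N_acts[of _ ts]) (use d len ss_def in \<open>auto simp: q'_def\<close>)
  have same: "\<And>x. x < nt \<Longrightarrow> x \<noteq> 1 \<Longrightarrow> x \<noteq> iRuler \<Longrightarrow> ts' ! x = ts ! x"
    using kept by (simp add: g_def extend_act_def scan_act_def)
  have t1': "ts' ! 1 = (fst (ts ! 1), Suc p)"
    using new[of 1] t1 ntapes_M_ge by (simp add: g_def extend_act_def scan_act_def act_lo)
  note moved = answered_move[OF pw meq1 same t1']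
  show ?thesis
  proof (cases "o0 \<le> p")
    case True
    then have po: "p = o0" using p by (simp add: o0_def)
    have tw': "ts' ! iRuler = (ruler (Suc (Suc p)), Suc (Suc p))"
      using new[of iRuler] tw True po ntapes_M_ge by (simp add: g_def extend_act_def act_hi ruler_ext o0_def)
    have "budget ts r o0 \<le> budget_ext r (length b)"
      using budget_le_budget_ext pw p po by (simp add: answered_def o0_def)
    then have "inv_scan_ext \<phi> a (Suc n) m ts'" unfolding inv_scan_ext_def
      apply (rule_tac exI[of _ m0], rule_tac exI[of _ b], rule_tac exI[of _ r], rule_tac exI[of _ "Suc p"])
      using moved p po tw' bnd by (simp add: o0_def)
    then show ?thesis using st l moved(4) True by (auto simp: mode_inv_def q'_def intro!: sim_invI[where m=m])
  next
    case False
    have tw': "ts' ! iRuler = (ruler (Suc o0), Suc (Suc p))"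
      using new[of iRuler] tw False len ntapes_M_ge by (simp add: g_def scan_act_def act_hi o0_def ss_def)
    have "inv_scan \<phi> a (Suc n) m ts'" unfolding inv_scan_def
      apply (rule_tac exI[of _ m0], rule_tac exI[of _ b], rule_tac exI[of _ r], rule_tac exI[of _ "Suc p"])
      using moved p False tw' bnd by (simp add: o0_def)
    then show ?thesis using st l moved(4) False by (auto simp: mode_inv_def q'_def intro!: sim_invI[where m=m])
  qed
qed

lemma step_scan:
  assumes len: "length ts = nt" and P: "inv_scan \<phi> a n m ts"
  shows "next_inv \<phi> a n m (step N \<phi> (SCAN, ts))"
proof -
  from P obtain m0 b r p where pw: "answered \<phi> a m m0 b r ts" and p: "p \<le> length b" "p \<le> lrev M \<phi> a m0"
    and meq1: "agrees_but_answer ts (snd (run M \<phi> a m)) p"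
    and tw: "ts ! iRuler = (ruler (Suc (lrev M \<phi> a m0)), Suc p)" and bnd: "n \<le> budget ts r (lrev M \<phi> a m0) + 2 + p"
    unfolding inv_scan_def by blast
  show ?thesis
  proof (cases "length b \<le> p")
    case True
    have t1: "ts ! 1 = (encode b, p)" using answered_answer_tape[OF pw meq1] .
    define ss where "ss = heads ts"
    have "ss ! 1 = SBlank" using len t1 True by (simp add: ss_def encode_blank_iff)
    then have d: "deltaN SCAN ss = (REWIND, acts (keep ss))" by (simp add: deltaN_def)
    have st: "step N \<phi> (SCAN, ts) = (REWIND, ts)" by (rule step_N_keep) (use d len ss_def in auto)
    have ans: "length (content (ts ! 1)) \<le> lrev M \<phi> a m"
      using answer_length_bound[of ts \<phi> a m] meq1 by (simp add: agrees_but_answer_def)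
    have "inv_rewind \<phi> a (Suc n) m ts" unfolding inv_rewind_def
      apply (rule exI[of _ m0], rule exI[of _ b], rule exI[of _ r], rule exI[of _ "Suc p"])
      using pw p True meq1 tw bnd by simp
    then show ?thesis using st len ans by (auto simp: mode_inv_def intro!: sim_invI[where m=m])
  next
    case False
    then show ?thesis using step_scan_advance[OF len pw _ p(2) meq1 tw bnd] by simp
  qed
qed

lemma step_scan_ext:
  assumes len: "length ts = nt" and P: "inv_scan_ext \<phi> a n m ts"
  shows "next_inv \<phi> a n m (step N \<phi> (SCAN_EXT, ts))"
proof -
  from P obtain m0 b r p where pw: "answered \<phi> a m m0 b r ts" and p: "lrev M \<phi> a m0 < p" "p \<le> length b"
    and meq1: "agrees_but_answer ts (snd (run M \<phi> a m)) p"
    and tw: "ts ! iRuler = (ruler (Suc p), Suc p)" and bnd: "n \<le> budget_ext r (length b) + 2 + p"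
    unfolding inv_scan_ext_def by blast
  have t1: "ts ! 1 = (encode b, p)" using answered_answer_tape[OF pw meq1] .
  define ss where "ss = heads ts"
  have s1: "ss ! 1 = SBlank \<longleftrightarrow> length b \<le> p" using len t1 by (simp add: ss_def encode_blank_iff)
  show ?thesis
  proof (cases "length b \<le> p")
    case True
    then have d: "deltaN SCAN_EXT ss = (REWIND_EXT, acts (keep ss))" using s1 by (simp add: deltaN_def)
    have st: "step N \<phi> (SCAN_EXT, ts) = (REWIND_EXT, ts)" by (rule step_N_keep) (use d len ss_def in auto)
    have ans: "length (content (ts ! 1)) \<le> lrev M \<phi> a m"
      using answer_length_bound[of ts \<phi> a m] meq1 by (simp add: agrees_but_answer_def)
    have "inv_rewind_ext \<phi> a (Suc n) m ts" unfolding inv_rewind_ext_def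
      apply (rule exI[of _ m0], rule exI[of _ b], rule exI[of _ r], rule exI[of _ "Suc p"])
      using pw p True meq1 tw bnd by simp
    then show ?thesis using st len ans by (auto simp: mode_inv_def intro!: sim_invI[where m=m])
  next
    case False
    then have d: "deltaN SCAN_EXT ss = (SCAN_EXT, acts (extend_act ss))" using s1 by (simp add: deltaN_def)
    obtain ts' where st: "step N \<phi> (SCAN_EXT, ts) = (SCAN_EXT, ts')" and l: "length ts' = nt"
      and new: "\<And>x. x < nt \<Longrightarrow> ts' ! x = act x (ts!x) (extend_act ss x)"
      and kept: "\<And>x. x < nt \<Longrightarrow> extend_act ss x = keep ss x \<Longrightarrow> ts' ! x = ts ! x"
      by (rule step_N_acts[of _ ts]) (use d len ss_def in auto)
    have same: "\<And>x. x < nt \<Longrightarrow> x \<noteq> 1 \<Longrightarrow> x \<noteq> iRuler \<Longrightarrow> ts' ! x = ts ! x"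
      using kept by (simp add: extend_act_def)
    have t1': "ts' ! 1 = (fst (ts ! 1), Suc p)" using new[of 1] t1 ntapes_M_ge by (simp add: extend_act_def act_lo)
    note moved = answered_move[OF pw meq1 same t1']
    have tw': "ts' ! iRuler = (ruler (Suc (Suc p)), Suc (Suc p))"
      using new[of iRuler] tw ntapes_M_ge by (simp add: extend_act_def act_hi ruler_ext)
    have "inv_scan_ext \<phi> a (Suc n) m ts'" unfolding inv_scan_ext_def
      apply (rule exI[of _ m0], rule exI[of _ b], rule exI[of _ r], rule exI[of _ "Suc p"])
      using moved False p tw' bnd by simp
    then show ?thesis using st l moved(4) by (auto simp: mode_inv_def intro!: sim_invI[where m=m])
  qed
qed

lemma step_rewind_done:
  assumes len: "length ts = nt" and pw: "answered \<phi> a m m0 b r ts" and bo: "length b \<le> lrev M \<phi> a m0"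
    and meq: "agrees ts (snd (run M \<phi> a m))" and tw: "ts ! iRuler = (ruler (Suc (lrev M \<phi> a m0)), 0)"
    and bnd: "n \<le> budget ts r (lrev M \<phi> a m0) + 4 + 2 * length b"
  shows "next_inv \<phi> a n m (step N \<phi> (REWIND, ts))"
proof -
  from pw have mS: "m = Suc m0" and nh: "\<not> halted_at M \<phi> a m0" and fa: "fst (run M \<phi> a m) = qans M"
    and mul: "clock_value ts (Suc (lrev M \<phi> a m0)) < m" and cok: "counter_inv ts r"
    and card0: "card (lrev M \<phi> a ` {..m0}) = Suc r" and rok: "clock_inv ts (Suc (lrev M \<phi> a m0))"
    and lrm: "lrev M \<phi> a m = lrev M \<phi> a m0"
    using bo unfolding answered_def halted_at_def by auto
  have card: "card (lrev M \<phi> a ` {..m}) = Suc r" using card0 lrev_image_Suc_eq[of \<phi> a m0] lrm mS by simp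
  have ans: "length (content (ts ! 1)) \<le> lrev M \<phi> a m"
    using meq answer_length_bound[of ts \<phi> a m] ntapes_M_ge by (simp add: agrees_def)
  define ss where "ss = heads ts"
  have sW: "ss ! iRuler = S0" using len tw by (simp add: ss_def ruler_def)
  show ?thesis
  proof (cases "clock_expired ss")
    case True
    then have d: "deltaN REWIND ss = (HALT, acts (keep ss))" using sW by (simp add: deltaN_def)
    have st: "step N \<phi> (REWIND, ts) = (HALT, ts)" by (rule step_N_keep) (use d len ss_def in auto)
    have "\<phi> \<notin> A"
      by (rule clock_expired_not_in_A[OF len _ True[unfolded ss_def] nh]) (use rok mul lrm mS in auto)
    then have "inv_halt \<phi> a m ts" using meq card cok by (simp add: inv_halt_def counter_inv_def)
    then show ?thesis using st len ans by (auto simp: mode_inv_def intro!: sim_invI[where m=m])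
  next
    case False
    then have d: "deltaN REWIND ss = (sim_state (qans M), acts (tick_act ss))" using sW by (simp add: deltaN_def)
    obtain ts' where st: "step N \<phi> (REWIND, ts) = (sim_state (qans M), ts')" and l: "length ts' = nt"
      and new: "\<And>x. x < nt \<Longrightarrow> ts' ! x = act x (ts!x) (tick_act ss x)"
      and kept: "\<And>x. x < nt \<Longrightarrow> tick_act ss x = keep ss x \<Longrightarrow> ts' ! x = ts ! x"
      by (rule step_N_acts[of _ ts]) (use d len ss_def in auto)
    have tick: "clock_inv ts' (Suc (lrev M \<phi> a m0)) \<and>
        clock_value ts' (Suc (lrev M \<phi> a m0)) = Suc (clock_value ts (Suc (lrev M \<phi> a m0)))"
      by (rule clock_tick[OF len rok False[unfolded ss_def] _ new]) (auto simp: ss_def)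
    have meq': "agrees ts' (snd (run M \<phi> a m))" using meq kept unfolding agrees_def by (auto simp: tick_act_def)
    have tw': "ts' ! iRuler = (ruler (Suc (lrev M \<phi> a m0)), 0)" using kept[of iRuler] tw by (simp add: tick_act_def)
    have cok': "counter_inv ts' r" using cok kept by (subst counter_inv_cong) (auto simp: tick_act_def)
    have ans': "length (content (ts' ! 1)) \<le> lrev M \<phi> a m"
      using meq' answer_length_bound[of ts' \<phi> a m] ntapes_M_ge by (simp add: agrees_def)
    have bnd': "Suc n \<le> r * phase_cost (Suc (lrev M \<phi> a m0)) + overhead (Suc (lrev M \<phi> a m0))
        + clock_value ts' (Suc (lrev M \<phi> a m0)) * tick_cost (Suc (lrev M \<phi> a m0))"
      using bnd tick bo by (simp add: budget_def tick_cost_def)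
    have "mode_inv \<phi> a (Suc n) m (sim_state (fst (run M \<phi> a m))) ts'"
      by (rule mode_inv_sim_state[where r = r]) (use meq' tw' tick mul cok' card bnd' lrm in auto)
    then show ?thesis using st l ans' fa by (auto intro!: sim_invI[where m=m])
  qed
qed

lemma step_rewind_move:
  assumes len: "length ts = nt" and q: "q = REWIND \<or> q = REWIND_EXT"
    and pw: "answered \<phi> a m m0 b r ts" and meq1: "agrees_but_answer ts (snd (run M \<phi> a m)) (h - 1)"
    and tw: "ts ! iRuler = (ruler L, h)" and h: "h \<noteq> 0"
  obtains ts' where "step N \<phi> (q, ts) = (q, ts')" "length ts' = nt"
    "answered \<phi> a m m0 b r ts'" "agrees_but_answer ts' (snd (run M \<phi> a m)) (h - 1 - 1)"
    "budget ts' r (lrev M \<phi> a m0) = budget ts r (lrev M \<phi> a m0)"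
    "length (content (ts' ! 1)) \<le> lrev M \<phi> a m" "ts' ! iRuler = (ruler L, h - 1)"
proof -
  define ss where "ss = heads ts"
  have d: "deltaN q ss = (q, acts (rewind_act ss))" using q len tw h by (auto simp: ss_def deltaN_def ruler_def)
  obtain ts' where st: "step N \<phi> (q, ts) = (q, ts')" and l: "length ts' = nt"
    and new: "\<And>x. x < nt \<Longrightarrow> ts' ! x = act x (ts!x) (rewind_act ss x)"
    and kept: "\<And>x. x < nt \<Longrightarrow> rewind_act ss x = keep ss x \<Longrightarrow> ts' ! x = ts ! x"
    by (rule step_N_acts[of _ ts]) (use d len q ss_def in auto)
  have same: "\<And>x. x < nt \<Longrightarrow> x \<noteq> 1 \<Longrightarrow> x \<noteq> iRuler \<Longrightarrow> ts' ! x = ts ! x"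
    using kept by (simp add: rewind_act_def)
  have t1: "ts' ! 1 = (fst (ts ! 1), h - 1 - 1)"
    using new[of 1] answered_answer_tape[OF pw meq1] ntapes_M_ge by (simp add: rewind_act_def act_lo)
  have "ts' ! iRuler = (ruler L, h - 1)"
    using new[of iRuler] tw len ntapes_M_ge by (simp add: rewind_act_def act_hi ss_def)
  then show thesis using that st l answered_move[OF pw meq1 same t1] by blast
qed

lemma step_rewind:
  assumes len: "length ts = nt" and P: "inv_rewind \<phi> a n m ts"
  shows "next_inv \<phi> a n m (step N \<phi> (REWIND, ts))"
proof -
  from P obtain m0 b r h where pw: "answered \<phi> a m m0 b r ts" and bo: "length b \<le> lrev M \<phi> a m0"
    and h: "h \<le> Suc (length b)" and meq1: "agrees_but_answer ts (snd (run M \<phi> a m)) (h - 1)"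
    and tw: "ts ! iRuler = (ruler (Suc (lrev M \<phi> a m0)), h)"
    and bnd: "n + h \<le> budget ts r (lrev M \<phi> a m0) + 4 + 2 * length b"
    unfolding inv_rewind_def by blast
  show ?thesis
  proof (cases "h = 0")
    case True
    have "agrees ts (snd (run M \<phi> a m))"
      using meq1 True pw by (auto simp: answered_def intro!: agrees_but_answer_0)
    then show ?thesis using step_rewind_done[OF len pw bo] tw bnd True by simp
  next
    case False
    obtain ts' where st: "step N \<phi> (REWIND, ts) = (REWIND, ts')" and l: "length ts' = nt"
      and pw': "answered \<phi> a m m0 b r ts'" and meq1': "agrees_but_answer ts' (snd (run M \<phi> a m)) (h - 1 - 1)"
      and b0: "budget ts' r (lrev M \<phi> a m0) = budget ts r (lrev M \<phi> a m0)"
      and ans: "length (content (ts' ! 1)) \<le> lrev M \<phi> a m"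
      and tw': "ts' ! iRuler = (ruler (Suc (lrev M \<phi> a m0)), h - 1)"
      by (rule step_rewind_move[OF len disjI1[OF refl] pw meq1 tw False])
    have "inv_rewind \<phi> a (Suc n) m ts'" unfolding inv_rewind_def
      apply (rule exI[of _ m0], rule exI[of _ b], rule exI[of _ r], rule exI[of _ "h - 1"])
      using pw' bo h meq1' tw' bnd b0 False by simp
    then show ?thesis using st l ans by (auto simp: mode_inv_def intro!: sim_invI[where m=m])
  qed
qed

lemma revision_act_effect:
  assumes len: "length ts = nt" and cok: "counter_inv ts r" and r: "r < Nc"
    and dirs: "\<forall>i<K. snd (ts ! iDir i) = 0"
    and new: "\<And>x. x < nt \<Longrightarrow> ts' ! x = act x (ts!x) (revision_act (heads ts) x)"
    and kept: "\<And>x. x < nt \<Longrightarrow> revision_act (heads ts) x = keep (heads ts) x \<Longrightarrow> ts' ! x = ts ! x"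
  shows "counter_inv ts' (Suc r)" and "\<forall>i<K. snd (ts' ! iDir i) = 0 \<and> fst (ts' ! iDir i) 0 = S0"
    and "\<And>x. x < nt \<Longrightarrow> \<not> isDir x \<Longrightarrow> \<not> isCount x \<Longrightarrow> ts' ! x = ts ! x"
proof -
  have sC: "\<And>j. j < Nc \<Longrightarrow> heads ts ! iCount j = S1 \<longleftrightarrow> j < r" using len cok by (simp add: counter_inv_def)
  have free: "least_free_counter (heads ts) = r" unfolding least_free_counter_def
    by (rule Least_equality) (use sC r in \<open>auto simp: not_less[symmetric]\<close>)
  have "snd (ts' ! iCount j) = 0 \<and> (fst (ts' ! iCount j) 0 = S1) = (j < Suc r)" if j: "j < Nc" for j
  proof (cases "j = r")
    case True
    have "ts' ! iCount j = act (iCount j) (ts ! iCount j) (S1, Stay)"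
      using new[of "iCount j"] j True free by (simp add: revision_act_def)
    then show ?thesis using cok j True ntapes_M_ge by (simp add: act_hi counter_inv_def)
  next
    case False
    have "ts' ! iCount j = ts ! iCount j" using kept[of "iCount j"] j False free by (simp add: revision_act_def)
    then show ?thesis using cok j False by (auto simp: counter_inv_def)
  qed
  then show "counter_inv ts' (Suc r)" unfolding counter_inv_def using r by simp
  show "\<forall>i<K. snd (ts' ! iDir i) = 0 \<and> fst (ts' ! iDir i) 0 = S0"
  proof (intro allI impI)
    fix i assume i: "i < K"
    have "ts' ! iDir i = act (iDir i) (ts ! iDir i) (S0, Stay)" using new[of "iDir i"] i by (simp add: revision_act_def)
    then show "snd (ts' ! iDir i) = 0 \<and> fst (ts' ! iDir i) 0 = S0" using dirs i ntapes_M_ge by (simp add: act_hi)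
  qed
  show "\<And>x. x < nt \<Longrightarrow> \<not> isDir x \<Longrightarrow> \<not> isCount x \<Longrightarrow> ts' ! x = ts ! x"
    by (rule kept) (auto simp: revision_act_def)
qed

lemma step_rewind_ext_revision:
  assumes len: "length ts = nt" and pw: "answered \<phi> a m m0 b r ts" and bo: "lrev M \<phi> a m0 < length b"
    and meq: "agrees ts (snd (run M \<phi> a m))" and tw: "ts ! iRuler = (ruler (Suc (length b)), 0)"
    and bnd: "n \<le> budget_ext r (length b) + 4 + 2 * length b" and rl: "r < Nc"
  shows "next_inv \<phi> a n m (step N \<phi> (REWIND_EXT, ts))"
proof -
  from pw have mS: "m = Suc m0" and fa: "fst (run M \<phi> a m) = qans M" and cok: "counter_inv ts r"
    and card0: "card (lrev M \<phi> a ` {..m0}) = Suc r" and rok: "clock_inv ts (Suc (lrev M \<phi> a m0))"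
    and lrm: "lrev M \<phi> a m = length b"
    using bo unfolding answered_def by auto
  have card: "card (lrev M \<phi> a ` {..m}) = Suc (Suc r)"
    using card0 lrev_image_Suc_new[of \<phi> a m0] lrm bo mS by simp
  define ss where "ss = heads ts"
  have "\<not> (\<forall>j<Nc. ss ! iCount j = S1)" using len cok rl by (auto simp: ss_def counter_inv_def)
  then have d: "deltaN REWIND_EXT ss = (SYNC1, acts (revision_act ss))"
    using len tw by (simp add: deltaN_def ss_def ruler_def)
  obtain ts' where st: "step N \<phi> (REWIND_EXT, ts) = (SYNC1, ts')" and l: "length ts' = nt"
    and new: "\<And>x. x < nt \<Longrightarrow> ts' ! x = act x (ts!x) (revision_act ss x)"
    and kept: "\<And>x. x < nt \<Longrightarrow> revision_act ss x = keep ss x \<Longrightarrow> ts' ! x = ts ! x"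
    by (rule step_N_acts[of _ ts]) (use d len ss_def in auto)
  have dirs: "\<forall>i<K. snd (ts ! iDir i) = 0" using rok by (simp add: clock_inv_def)
  note rev = revision_act_effect[OF len cok rl dirs new[unfolded ss_def] kept[unfolded ss_def]]
  have meq': "agrees ts' (snd (run M \<phi> a m))"
    using meq by (rule agrees_cong) (auto intro: rev(3))
  have tw': "ts' ! iRuler = (ruler (Suc (length b)), 0)" using tw by (subst rev(3)) auto
  have tR: "\<forall>i<K. ts' ! iClock i = ts ! iClock i" by (auto intro: rev(3))
  have "(\<Sum>i<K. snd (ts' ! iClock i)) \<le> K * Suc (lrev M \<phi> a m0)"
    using clock_inv_positions_sum_le[OF rok] tR by simp
  then have sump: "(\<Sum>i<K. snd (ts' ! iClock i)) \<le> K * Suc (length b)"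
    using bo by (meson Suc_le_mono less_imp_le_nat mult_le_mono2 order_trans)
  have ps: "sync_phase \<phi> a m (Suc r) ts'"
    unfolding sync_phase_def by (intro conjI fa meq' rev(1) rev(2) card) simp_all
  moreover have "\<forall>i<K. fst (ts' ! iClock i) = ruler (Suc (lrev M \<phi> a m0))
      \<and> snd (ts' ! iClock i) \<le> Suc (lrev M \<phi> a m0)"
    using tR rok by (simp add: clock_inv_def)
  moreover have "budget_sync (Suc r) (Suc (length b)) = budget_ext r (length b)"
    by (simp add: budget_sync_def budget_ext_def)
  ultimately have "inv_sync1 \<phi> a (Suc n) m ts'" unfolding inv_sync1_def
    apply (rule_tac exI[of _ "Suc r"], rule_tac exI[of _ "Suc (lrev M \<phi> a m0)"], rule_tac exI[of _ "Suc (length b)"])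
    using lrm tw' bo bnd sump by simp
  then show ?thesis using st l sync_phase_answer_bound[OF ps] by (auto simp: mode_inv_def intro!: sim_invI[where m=m])
qed

lemma step_rewind_ext_done:
  assumes len: "length ts = nt" and pw: "answered \<phi> a m m0 b r ts" and bo: "lrev M \<phi> a m0 < length b"
    and meq: "agrees ts (snd (run M \<phi> a m))" and tw: "ts ! iRuler = (ruler (Suc (length b)), 0)"
    and bnd: "n \<le> budget_ext r (length b) + 4 + 2 * length b"
  shows "next_inv \<phi> a n m (step N \<phi> (REWIND_EXT, ts))"
proof (cases "r = Nc")
  case True
  from pw have mS: "m = Suc m0" and card0: "card (lrev M \<phi> a ` {..m0}) = Suc r"
    and lrm: "lrev M \<phi> a m = length b" and cok: "counter_inv ts r"
    using bo unfolding answered_def by auto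
  have card: "card (lrev M \<phi> a ` {..m}) = Suc (Suc Nc)"
    using card0 lrev_image_Suc_new[of \<phi> a m0] lrm bo mS True by simp
  define ss where "ss = heads ts"
  have "\<forall>j<Nc. ss ! iCount j = S1" using len cok True by (simp add: ss_def counter_inv_def)
  then have d: "deltaN REWIND_EXT ss = (HALT, acts (keep ss))"
    using len tw by (simp add: deltaN_def ss_def ruler_def)
  have st: "step N \<phi> (REWIND_EXT, ts) = (HALT, ts)" by (rule step_N_keep) (use d len ss_def in auto)
  have "Nc < card (lrev M \<phi> a ` {..m})" using card by simp
  then have "\<phi> \<notin> A" by (rule too_many_revisions_not_in_A)
  then have "inv_halt \<phi> a m ts" using meq card by (simp add: inv_halt_def)
  moreover have "length (content (ts ! 1)) \<le> lrev M \<phi> a m"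
    using meq answer_length_bound[of ts \<phi> a m] ntapes_M_ge by (simp add: agrees_def)
  ultimately show ?thesis using st len by (auto simp: mode_inv_def intro!: sim_invI[where m=m])
next
  case False
  then have "r < Nc" using pw by (simp add: answered_def counter_inv_def)
  then show ?thesis by (rule step_rewind_ext_revision[OF len pw bo meq tw bnd])
qed

lemma step_rewind_ext:
  assumes len: "length ts = nt" and P: "inv_rewind_ext \<phi> a n m ts"
  shows "next_inv \<phi> a n m (step N \<phi> (REWIND_EXT, ts))"
proof -
  from P obtain m0 b r h where pw: "answered \<phi> a m m0 b r ts" and bo: "lrev M \<phi> a m0 < length b"
    and h: "h \<le> Suc (length b)" and meq1: "agrees_but_answer ts (snd (run M \<phi> a m)) (h - 1)"
    and tw: "ts ! iRuler = (ruler (Suc (length b)), h)"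
    and bnd: "n + h \<le> budget_ext r (length b) + 4 + 2 * length b"
    unfolding inv_rewind_ext_def by blast
  show ?thesis
  proof (cases "h = 0")
    case True
    have "agrees ts (snd (run M \<phi> a m))"
      using meq1 True pw by (auto simp: answered_def intro!: agrees_but_answer_0)
    then show ?thesis using step_rewind_ext_done[OF len pw bo] tw bnd True by simp
  next
    case False
    obtain ts' where st: "step N \<phi> (REWIND_EXT, ts) = (REWIND_EXT, ts')" and l: "length ts' = nt"
      and pw': "answered \<phi> a m m0 b r ts'" and meq1': "agrees_but_answer ts' (snd (run M \<phi> a m)) (h - 1 - 1)"
      and "budget ts' r (lrev M \<phi> a m0) = budget ts r (lrev M \<phi> a m0)"
      and ans: "length (content (ts' ! 1)) \<le> lrev M \<phi> a m"
      and tw': "ts' ! iRuler = (ruler (Suc (length b)), h - 1)"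
      by (rule step_rewind_move[OF len disjI2[OF refl] pw meq1 tw False])
    have "inv_rewind_ext \<phi> a (Suc n) m ts'" unfolding inv_rewind_ext_def
      apply (rule exI[of _ m0], rule exI[of _ b], rule exI[of _ r], rule exI[of _ "h - 1"])
      using pw' bo h meq1' tw' bnd False by simp
    then show ?thesis using st l ans by (auto simp: mode_inv_def intro!: sim_invI[where m=m])
  qed
qed

lemma step_sync1:
  assumes len: "length ts = nt" and P: "inv_sync1 \<phi> a n m ts"
  shows "next_inv \<phi> a n m (step N \<phi> (SYNC1, ts))"
proof -
  from P obtain r Lo L where L: "L = Suc (lrev M \<phi> a m)" and ps: "sync_phase \<phi> a m r ts" and tw: "ts ! iRuler = (ruler L, 0)"
    and Lo: "1 \<le> Lo" "Lo \<le> L" and tR: "\<forall>i<K. fst (ts ! iClock i) = ruler Lo \<and> snd (ts ! iClock i) \<le> Lo"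
    and bnd: "n + (\<Sum>i<K. snd (ts ! iClock i)) \<le> budget_sync r L + 2 * L + 3 + K * L"
    unfolding inv_sync1_def by blast
  define ss where "ss = heads ts"
  have ssx: "\<And>x. x < nt \<Longrightarrow> ss ! x = fst (ts!x) (snd (ts!x))" using len by (simp add: ss_def)
  have sR: "\<And>i. i < K \<Longrightarrow> ss ! iClock i = S0 \<longleftrightarrow> snd (ts ! iClock i) = 0" using ssx tR Lo by (simp add: ruler_S0_iff)
  show ?thesis
  proof (cases "\<forall>i<K. ss ! iClock i = S0")
    case True
    then have z: "\<forall>i<K. snd (ts ! iClock i) = 0" using sR by simp
    have d: "deltaN SYNC1 ss = (SYNC2, acts (keep ss))" using True by (simp add: deltaN_def)
    have st': "step N \<phi> (SYNC1, ts) = (SYNC2, ts)"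
      by (rule step_N_keep) (use d len ss_def in auto)
    have rr: "\<forall>i<K. ts ! iClock i = (ruler_mix L Lo 0, 0)" using tR z by (metis ruler_mix_0 prod.collapse)
    have "inv_sync2 \<phi> a (Suc n) m ts" unfolding inv_sync2_def
      apply (rule exI[of _ r], rule exI[of _ Lo], rule exI[of _ L], rule exI[of _ "0::nat"])
      using L ps tw Lo rr bnd z by simp
    then show ?thesis using st' len sync_phase_answer_bound[OF ps] by (auto simp: mode_inv_def intro!: sim_invI[where m=m])
  next
    case False
    have d: "deltaN SYNC1 ss = (SYNC1, acts (sync1_act ss))" using False by (simp add: deltaN_def)
    obtain ts' where st: "step N \<phi> (SYNC1, ts) = (SYNC1, ts')" and l: "length ts' = nt"
      and new: "\<And>x. x < nt \<Longrightarrow> ts' ! x = act x (ts!x) (sync1_act ss x)"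
      and kept: "\<And>x. x < nt \<Longrightarrow> sync1_act ss x = keep ss x \<Longrightarrow> ts' ! x = ts ! x"
      by (rule step_N_acts[of _ ts]) (use d len ss_def in auto)
    have oth: "\<forall>i<tM. ts' ! i = ts ! i" "\<forall>i<K. ts' ! iDir i = ts ! iDir i" "\<forall>j<Nc. ts' ! iCount j = ts ! iCount j"
      using kept by (auto simp: sync1_act_def)
    have tw': "ts' ! iRuler = (ruler L, 0)" using kept[of iRuler] tw by (simp add: sync1_act_def)
    have tR': "\<And>i. i < K \<Longrightarrow> ts' ! iClock i = (ruler Lo, snd (ts ! iClock i) - 1)"
    proof -
      fix i assume i: "i < K"
      have "ts' ! iClock i = act (iClock i) (ts ! iClock i) (sync1_act ss (iClock i))" using new[of "iClock i"] i by simp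
      then show "ts' ! iClock i = (ruler Lo, snd (ts ! iClock i) - 1)" using i tR[rule_format, OF i] sR[of i] ssx[of "iClock i"] ntapes_M_ge
        by (cases "ts ! iClock i") (auto simp: sync1_act_def keep_def act_hi)
    qed
    have lt: "(\<Sum>i<K. snd (ts' ! iClock i)) < (\<Sum>i<K. snd (ts ! iClock i))"
    proof (rule sum_strict_mono_ex1)
      show "\<forall>x\<in>{..<K}. snd (ts' ! iClock x) \<le> snd (ts ! iClock x)" using tR' by simp
      obtain i where "i < K" "ss ! iClock i \<noteq> S0" using False by auto
      then show "\<exists>a\<in>{..<K}. snd (ts' ! iClock a) < snd (ts ! iClock a)" using tR' sR by (intro bexI[of _ i]) auto
    qed simp
    have ps': "sync_phase \<phi> a m r ts'" using ps sync_phase_cong[OF oth] by simp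
    have "inv_sync1 \<phi> a (Suc n) m ts'" unfolding inv_sync1_def
      apply (rule exI[of _ r], rule exI[of _ Lo], rule exI[of _ L])
      using L ps' tw' Lo tR tR' bnd lt by auto
    then show ?thesis using st l sync_phase_answer_bound[OF ps'] by (auto simp: mode_inv_def intro!: sim_invI[where m=m])
  qed
qed

lemma step_sync2:
  assumes len: "length ts = nt" and P: "inv_sync2 \<phi> a n m ts"
  shows "next_inv \<phi> a n m (step N \<phi> (SYNC2, ts))"
proof -
  from P obtain r Lo L h where L: "L = Suc (lrev M \<phi> a m)" and ps: "sync_phase \<phi> a m r ts" and h: "h \<le> L"
    and tw: "ts ! iRuler = (ruler L, h)" and Lo: "1 \<le> Lo" "Lo \<le> L" and tR: "\<forall>i<K. ts ! iClock i = (ruler_mix L Lo h, h)"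
    and bnd: "n \<le> budget_sync r L + 2 * L + 4 + K * L + h"
    unfolding inv_sync2_def by blast
  define ss where "ss = heads ts"
  have ssx: "\<And>x. x < nt \<Longrightarrow> ss ! x = fst (ts!x) (snd (ts!x))" using len by (simp add: ss_def)
  have sW: "ss ! iRuler = SBlank \<longleftrightarrow> h = L" using ssx[of iRuler] tw h L by (auto simp: ruler_Blank_iff)
  show ?thesis
  proof (cases "h = L")
    case True
    have d: "deltaN SYNC2 ss = (SYNC3, acts (keep ss))" using True sW by (simp add: deltaN_def)
    have st': "step N \<phi> (SYNC2, ts) = (SYNC3, ts)"
      by (rule step_N_keep) (use d len ss_def in auto)
    have rr: "\<forall>i<K. ts ! iClock i = (ruler L, L)" using tR True ruler_mix_full[OF Lo(2)] by simp
    have "inv_sync3 \<phi> a (Suc n) m ts" unfolding inv_sync3_def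
      apply (rule exI[of _ r], rule exI[of _ L], rule exI[of _ L])
      using L ps tw rr bnd True by simp
    then show ?thesis using st' len sync_phase_answer_bound[OF ps] by (auto simp: mode_inv_def intro!: sim_invI[where m=m])
  next
    case False
    have d: "deltaN SYNC2 ss = (SYNC2, acts (sync2_act ss))" using False sW by (simp add: deltaN_def)
    obtain ts' where st: "step N \<phi> (SYNC2, ts) = (SYNC2, ts')" and l: "length ts' = nt"
      and new: "\<And>x. x < nt \<Longrightarrow> ts' ! x = act x (ts!x) (sync2_act ss x)"
      and kept: "\<And>x. x < nt \<Longrightarrow> sync2_act ss x = keep ss x \<Longrightarrow> ts' ! x = ts ! x"
      by (rule step_N_acts[of _ ts]) (use d len ss_def in auto)
    have oth: "\<forall>i<tM. ts' ! i = ts ! i" "\<forall>i<K. ts' ! iDir i = ts ! iDir i" "\<forall>j<Nc. ts' ! iCount j = ts ! iCount j"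
      using kept by (auto simp: sync2_act_def)
    have tw': "ts' ! iRuler = (ruler L, Suc h)" using new[of iRuler] tw ssx[of iRuler] ntapes_M_ge by (simp add: sync2_act_def act_hi)
    have tR': "\<forall>i<K. ts' ! iClock i = (ruler_mix L Lo (Suc h), Suc h)"
    proof (intro allI impI)
      fix i assume i: "i < K"
      have "ts' ! iClock i = act (iClock i) (ts ! iClock i) (ss ! iRuler, MvR)" using new[of "iClock i"] i by (simp add: sync2_act_def)
      then show "ts' ! iClock i = (ruler_mix L Lo (Suc h), Suc h)" using i tR ssx[of iRuler] tw ntapes_M_ge
        by (simp add: act_hi ruler_mix_Suc)
    qed
    have ps': "sync_phase \<phi> a m r ts'" using ps sync_phase_cong[OF oth] by simp
    have "inv_sync2 \<phi> a (Suc n) m ts'" unfolding inv_sync2_def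
      apply (rule exI[of _ r], rule exI[of _ Lo], rule exI[of _ L], rule exI[of _ "Suc h"])
      using L ps' tw' Lo tR' bnd h False by auto
    then show ?thesis using st l sync_phase_answer_bound[OF ps'] by (auto simp: mode_inv_def intro!: sim_invI[where m=m])
  qed
qed

lemma step_sync3:
  assumes len: "length ts = nt" and P: "inv_sync3 \<phi> a n m ts"
  shows "next_inv \<phi> a n m (step N \<phi> (SYNC3, ts))"
proof -
  from P obtain r L h where L: "L = Suc (lrev M \<phi> a m)" and ps: "sync_phase \<phi> a m r ts" and h: "h \<le> L"
    and tw: "ts ! iRuler = (ruler L, h)" and tR: "\<forall>i<K. ts ! iClock i = (ruler L, h)"
    and bnd: "n + h \<le> budget_sync r L + 4 * L + 5 + K * L"
    unfolding inv_sync3_def by blast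
  define ss where "ss = heads ts"
  have ssx: "\<And>x. x < nt \<Longrightarrow> ss ! x = fst (ts!x) (snd (ts!x))" using len by (simp add: ss_def)
  have sW: "ss ! iRuler = S0 \<longleftrightarrow> h = 0" using ssx[of iRuler] tw L by (simp add: ruler_S0_iff)
  show ?thesis
  proof (cases "h = 0")
    case True
    have d: "deltaN SYNC3 ss = (sim_state (qans M), acts (keep ss))" using True sW by (simp add: deltaN_def)
    have st: "step N \<phi> (SYNC3, ts) = (sim_state (qans M), ts)"
      by (rule step_N_keep) (use d len ss_def in auto)
    from ps have fa: "fst (run M \<phi> a m) = qans M" and meq: "agrees ts (snd (run M \<phi> a m))"
      and tD: "\<forall>i<K. snd (ts ! iDir i) = 0 \<and> fst (ts ! iDir i) 0 = S0"
      and cok: "counter_inv ts r" and r1: "1 \<le> r" and card: "card (lrev M \<phi> a ` {..m}) = Suc r"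
      unfolding sync_phase_def by auto
    have rok: "clock_inv ts L" using tR tD L True by (simp add: clock_inv_def)
    have clock0: "clock_value ts L = 0" using tR tD True by (simp add: clock_value_def)
    have "Suc n \<le> r * phase_cost L + overhead L + clock_value ts L * tick_cost L"
      using bnd True clock0 r1 by (cases r) (simp_all add: budget_sync_def phase_cost_def overhead_def algebra_simps)
    then have "mode_inv \<phi> a (Suc n) m (sim_state (fst (run M \<phi> a m))) ts"
      by (intro mode_inv_sim_state[where r = r]) (use meq tw rok clock0 cok card L True in auto)
    then show ?thesis using st len sync_phase_answer_bound[OF ps] fa by (auto intro!: sim_invI[where m=m])
  next
    case False
    have d: "deltaN SYNC3 ss = (SYNC3, acts (sync3_act ss))" using False sW by (simp add: deltaN_def)
    obtain ts' where st: "step N \<phi> (SYNC3, ts) = (SYNC3, ts')" and l: "length ts' = nt"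
      and new: "\<And>x. x < nt \<Longrightarrow> ts' ! x = act x (ts!x) (sync3_act ss x)"
      and kept: "\<And>x. x < nt \<Longrightarrow> sync3_act ss x = keep ss x \<Longrightarrow> ts' ! x = ts ! x"
      by (rule step_N_acts[of _ ts]) (use d len ss_def in auto)
    have oth: "\<forall>i<tM. ts' ! i = ts ! i" "\<forall>i<K. ts' ! iDir i = ts ! iDir i" "\<forall>j<Nc. ts' ! iCount j = ts ! iCount j"
      using kept by (auto simp: sync3_act_def)
    have tw': "ts' ! iRuler = (ruler L, h - 1)" using new[of iRuler] tw ssx[of iRuler] ntapes_M_ge by (simp add: sync3_act_def act_hi)
    have tR': "\<forall>i<K. ts' ! iClock i = (ruler L, h - 1)"
    proof (intro allI impI)
      fix i assume i: "i < K"
      have "ts' ! iClock i = act (iClock i) (ts ! iClock i) (ss ! iClock i, MvL)" using new[of "iClock i"] i by (simp add: sync3_act_def)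
      then show "ts' ! iClock i = (ruler L, h - 1)" using i tR ssx[of "iClock i"] ntapes_M_ge
        by (simp add: act_hi)
    qed
    have ps': "sync_phase \<phi> a m r ts'" using ps sync_phase_cong[OF oth] by simp
    have "inv_sync3 \<phi> a (Suc n) m ts'" unfolding inv_sync3_def
      apply (rule exI[of _ r], rule exI[of _ L], rule exI[of _ "h - 1"])
      using L ps' tw' tR' bnd h False by auto
    then show ?thesis using st l sync_phase_answer_bound[OF ps'] by (auto simp: mode_inv_def intro!: sim_invI[where m=m])
  qed
qed

lemma sim_inv_step:
  assumes I: "sim_inv \<phi> a n l c"
  shows "sim_inv \<phi> a (Suc n) (max l (length (content (snd (step N \<phi> c) ! 1)))) (step N \<phi> c)"
proof -
  obtain q ts where c: "c = (q, ts)" by (cases c)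
  from I c obtain m where len: "length ts = nt" and l: "l = lrev M \<phi> a m" and mi: "mode_inv \<phi> a n m q ts"
    by (auto simp: sim_inv_def)
  have "next_inv \<phi> a n m (step N \<phi> (q, ts))"
  using mi[unfolded mode_inv_def]
  proof (elim disjE conjE)
    assume "q = INIT" "inv_init a n m ts" then show ?thesis by (metis step_init[OF len])
  next
    assume "q = COPY" "inv_copy a n m ts" then show ?thesis by (metis step_copy[OF len])
  next
    assume "q = INIT_REWIND" "inv_init_rewind a n m ts" then show ?thesis by (metis step_init_rewind[OF len])
  next
    assume "q < nstates M" "inv_sim \<phi> a n m q ts" then show ?thesis by (metis step_sim[OF len])
  next
    assume "q = QRY" "inv_sim \<phi> a n m q ts" then show ?thesis by (metis step_query[OF len])
  next
    assume "q = HALT" "inv_halt \<phi> a m ts" then show ?thesis by (metis step_halt[OF len])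
  next
    assume "q = ANSWER" "inv_answer \<phi> a n m ts" then show ?thesis by (metis step_answer[OF len])
  next
    assume "q = SCAN" "inv_scan \<phi> a n m ts" then show ?thesis by (metis step_scan[OF len])
  next
    assume "q = REWIND" "inv_rewind \<phi> a n m ts" then show ?thesis by (metis step_rewind[OF len])
  next
    assume "q = SCAN_EXT" "inv_scan_ext \<phi> a n m ts" then show ?thesis by (metis step_scan_ext[OF len])
  next
    assume "q = REWIND_EXT" "inv_rewind_ext \<phi> a n m ts" then show ?thesis by (metis step_rewind_ext[OF len])
  next
    assume "q = SYNC1" "inv_sync1 \<phi> a n m ts" then show ?thesis by (metis step_sync1[OF len])
  next
    assume "q = SYNC2" "inv_sync2 \<phi> a n m ts" then show ?thesis by (metis step_sync2[OF len])
  next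
    assume "q = SYNC3" "inv_sync3 \<phi> a n m ts" then show ?thesis by (metis step_sync3[OF len])
  qed
  then show ?thesis using c l by simp
qed

lemma initial_N: "initial N a = (INIT, (encode a, 0) # replicate (nt - 1) blank_tape)"
  by (simp add: initial_def blank_tape_def)

lemma sim_inv_0: "sim_inv \<phi> a 0 (lrev N \<phi> a 0) (run N \<phi> a 0)"
proof -
  have nt1: "1 \<le> nt" using nt_simps(7) by linarith
  let ?ts = "(encode a, 0) # replicate (nt - 1) blank_tape"
  have "inv_init a 0 0 ?ts" unfolding inv_init_def by (auto simp: nth_Cons')
  moreover have "length ?ts = nt" using nt1 by simp
  ultimately show ?thesis by (auto simp: run_0 initial_N mode_inv_def intro!: sim_invI[where m=0])
qed

lemma sim_inv_run: "sim_inv \<phi> a n (lrev N \<phi> a n) (run N \<phi> a n)"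
proof (induction n)
  case 0 then show ?case by (rule sim_inv_0)
next
  case (Suc n)
  from sim_inv_step[OF Suc] show ?case by (simp add: run_Suc lrev.simps(2))
qed

definition phase_bound :: "nat \<Rightarrow> nat" where
  "phase_bound l = Nc * phase_cost (Suc l) + overhead (Suc l) + clock_max (Suc l) * tick_cost (Suc l)"

definition step_bound :: "nat \<Rightarrow> nat" where
  "step_bound l = phase_bound l + overhead (Suc l) + 2 * l + 4"

lemma phase_bound_mono: "l \<le> l' \<Longrightarrow> phase_bound l \<le> phase_bound l'"
  unfolding phase_bound_def
  by (intro add_mono mult_le_mono phase_cost_mono overhead_mono clock_max_mono tick_cost_mono) auto

lemma step_bound_mono: "l \<le> l' \<Longrightarrow> step_bound l \<le> step_bound l'"
  unfolding step_bound_def by (intro add_mono phase_bound_mono overhead_mono) auto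

lemma budget_ext_le: "r \<le> Nc \<Longrightarrow> lb \<le> l \<Longrightarrow> budget_ext r lb \<le> phase_bound l"
  unfolding budget_ext_def phase_bound_def
  by (intro add_mono mult_le_mono phase_cost_mono overhead_mono clock_max_mono tick_cost_mono) auto

lemma inv_sim_bound: "inv_sim \<phi> a n m q ts \<Longrightarrow> n \<le> phase_bound (lrev M \<phi> a m)"
proof -
  assume "inv_sim \<phi> a n m q ts"
  then obtain r where r: "counter_inv ts r" and rok: "clock_inv ts (Suc (lrev M \<phi> a m))"
    and bnd: "n \<le> r * phase_cost (Suc (lrev M \<phi> a m)) + overhead (Suc (lrev M \<phi> a m))
                + clock_value ts (Suc (lrev M \<phi> a m)) * tick_cost (Suc (lrev M \<phi> a m))"
    unfolding inv_sim_def by auto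
  have "r \<le> Nc" using r by (simp add: counter_inv_def)
  then show ?thesis using bnd clock_value_le_max[OF rok] unfolding phase_bound_def
    by (meson add_le_mono le_refl le_trans mult_le_mono1)
qed

lemma answered_budget_le:
  "answered \<phi> a m m0 b r ts \<Longrightarrow>
     budget ts r (lrev M \<phi> a m0) \<le> phase_bound (lrev M \<phi> a m) \<and> length b \<le> lrev M \<phi> a m \<and> r \<le> Nc"
  unfolding answered_def counter_inv_def
  using budget_le_budget_ext[of ts "lrev M \<phi> a m0" "lrev M \<phi> a m0" r]
    budget_ext_le[of r "lrev M \<phi> a m0" "lrev M \<phi> a m"] by auto

lemma sync_phase_budget_le: "sync_phase \<phi> a m r ts \<Longrightarrow> budget_sync r (Suc (lrev M \<phi> a m)) \<le> phase_bound (lrev M \<phi> a m)"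
  unfolding sync_phase_def counter_inv_def budget_sync_def phase_bound_def by (intro add_mono mult_le_mono) auto

lemma sync_cost_le_overhead: "K * Suc l + 3 * Suc l + 5 \<le> overhead (Suc l)"
  by (simp add: overhead_def algebra_simps)

lemma mode_inv_step_bound:
  assumes mi: "mode_inv \<phi> a n m q ts" and nh: "q \<noteq> HALT"
  shows "n \<le> step_bound (lrev M \<phi> a m)"
proof -
  define l where "l = lrev M \<phi> a m"
  consider "inv_init a n m ts" | "inv_copy a n m ts" | "inv_init_rewind a n m ts"
    | "inv_sim \<phi> a n m q ts" | "inv_answer \<phi> a n m ts" | "inv_scan \<phi> a n m ts" | "inv_rewind \<phi> a n m ts"
    | "inv_scan_ext \<phi> a n m ts" | "inv_rewind_ext \<phi> a n m ts"
    | "inv_sync1 \<phi> a n m ts" | "inv_sync2 \<phi> a n m ts" | "inv_sync3 \<phi> a n m ts"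
    using mi nh unfolding mode_inv_def by auto
  then have "n \<le> step_bound l"
  proof cases
    case 1 then show ?thesis by (simp add: inv_init_def)
  next
    case 2 then show ?thesis by (auto simp: inv_copy_def step_bound_def l_def)
  next
    case 3 then show ?thesis by (auto simp: inv_init_rewind_def step_bound_def l_def)
  next
    case 4 then show ?thesis using inv_sim_bound[of \<phi> a n m q ts] by (simp add: step_bound_def l_def)
  next
    case 5
    then obtain m0 b r where "answered \<phi> a m m0 b r ts" "n \<le> budget ts r (lrev M \<phi> a m0) + 1"
      unfolding inv_answer_def by blast
    then show ?thesis using answered_budget_le by (fastforce simp: step_bound_def l_def)
  next
    case 6
    then obtain m0 b r p where "answered \<phi> a m m0 b r ts" "n \<le> budget ts r (lrev M \<phi> a m0) + 2 + p" "p \<le> length b"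
      unfolding inv_scan_def by blast
    then show ?thesis using answered_budget_le by (fastforce simp: step_bound_def l_def)
  next
    case 7
    then obtain m0 b r h where "answered \<phi> a m m0 b r ts" "n + h \<le> budget ts r (lrev M \<phi> a m0) + 4 + 2 * length b"
      unfolding inv_rewind_def by blast
    then show ?thesis using answered_budget_le by (fastforce simp: step_bound_def l_def)
  next
    case 8
    then obtain m0 b r p where pw: "answered \<phi> a m m0 b r ts" and "n \<le> budget_ext r (length b) + 2 + p" "p \<le> length b"
      unfolding inv_scan_ext_def by blast
    then show ?thesis using answered_budget_le[OF pw] budget_ext_le[of r "length b" l] by (simp add: step_bound_def l_def)
  next
    case 9
    then obtain m0 b r h where pw: "answered \<phi> a m m0 b r ts" and "n + h \<le> budget_ext r (length b) + 4 + 2 * length b"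
      unfolding inv_rewind_ext_def by blast
    then show ?thesis using answered_budget_le[OF pw] budget_ext_le[of r "length b" l] by (simp add: step_bound_def l_def)
  next
    case 10
    then obtain r where ps: "sync_phase \<phi> a m r ts" and "n \<le> budget_sync r (Suc l) + 2 * Suc l + 3 + K * Suc l"
      unfolding inv_sync1_def l_def by fastforce
    then show ?thesis using sync_phase_budget_le[OF ps] sync_cost_le_overhead[of l] by (simp add: step_bound_def l_def)
  next
    case 11
    then obtain r h where ps: "sync_phase \<phi> a m r ts" and "n \<le> budget_sync r (Suc l) + 2 * Suc l + 4 + K * Suc l + h" "h \<le> Suc l"
      unfolding inv_sync2_def l_def by fastforce
    then show ?thesis using sync_phase_budget_le[OF ps] sync_cost_le_overhead[of l] by (simp add: step_bound_def l_def)
  next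
    case 12
    then obtain r h where ps: "sync_phase \<phi> a m r ts" and "n + h \<le> budget_sync r (Suc l) + 4 * Suc l + 5 + K * Suc l"
      unfolding inv_sync3_def l_def by fastforce
    then show ?thesis using sync_phase_budget_le[OF ps] sync_cost_le_overhead[of l] by (simp add: step_bound_def l_def)
  qed
  then show ?thesis by (simp add: l_def)
qed

lemma mode_inv_card:
  assumes mi: "mode_inv \<phi> a n m q ts"
  shows "card (lrev M \<phi> a ` {..m}) \<le> Nc + 2"
proof -
  have w: "card (lrev M \<phi> a ` {..m}) \<le> Nc + 2" if "answered \<phi> a m m0 b r ts" for m0 b r
    using that card_lrev_image_Suc_le[of \<phi> a m0] by (auto simp: answered_def counter_inv_def)
  have s: "card (lrev M \<phi> a ` {..m}) \<le> Nc + 2" if "sync_phase \<phi> a m r ts" for r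
    using that by (auto simp: sync_phase_def counter_inv_def)
  show ?thesis using mi w s unfolding mode_inv_def
    by (auto simp: inv_init_def inv_copy_def inv_init_rewind_def inv_sim_def inv_halt_def inv_answer_def inv_scan_def inv_rewind_def inv_scan_ext_def inv_rewind_ext_def
        inv_sync1_def inv_sync2_def inv_sync3_def counter_inv_def)
qed

lemma sim_inv_lrev: "sim_inv \<phi> a n l c \<Longrightarrow> \<exists>m. l = lrev M \<phi> a m \<and> card (lrev M \<phi> a ` {..m}) \<le> Nc + 2"
  using mode_inv_card by (auto simp: sim_inv_def)

lemma sim_inv_step_bound: "sim_inv \<phi> a n l c \<Longrightarrow> fst c \<noteq> HALT \<Longrightarrow> n \<le> step_bound l"
  using mode_inv_step_bound by (auto simp: sim_inv_def)

lemma sim_inv_halt: "sim_inv \<phi> a n l c \<Longrightarrow> fst c = HALT \<Longrightarrow>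
   \<exists>m. agrees (snd c) (snd (run M \<phi> a m)) \<and> (fst (run M \<phi> a m) = qhalt M \<or> \<phi> \<notin> A)"
  by (auto simp: sim_inv_def mode_inv_def inv_sim_def inv_halt_def)

lemma card_lrev_N_image: "card (lrev N \<phi> a ` {..n}) \<le> Nc + 2"
proof -
  obtain mn where mn: "lrev N \<phi> a n = lrev M \<phi> a mn" "card (lrev M \<phi> a ` {..mn}) \<le> Nc + 2"
    using sim_inv_lrev[OF sim_inv_run[of \<phi> a n]] by blast
  have "lrev N \<phi> a ` {..n} \<subseteq> lrev M \<phi> a ` {..mn}"
  proof
    fix v assume "v \<in> lrev N \<phi> a ` {..n}"
    then obtain j where j: "j \<le> n" "v = lrev N \<phi> a j" by auto
    obtain mj where mj: "lrev N \<phi> a j = lrev M \<phi> a mj"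
      using sim_inv_lrev[OF sim_inv_run[of \<phi> a j]] by blast
    show "v \<in> lrev M \<phi> a ` {..mn}"
    proof (cases "mj \<le> mn")
      case True then show ?thesis using j mj by auto
    next
      case False
      have "lrev M \<phi> a mn \<le> lrev M \<phi> a mj" using False lrev_mono[of mn mj M \<phi> a] by simp
      moreover have "lrev N \<phi> a j \<le> lrev N \<phi> a n" using lrev_mono[OF j(1)] by simp
      ultimately have "v = lrev M \<phi> a mn" using j mj mn by simp
      then show ?thesis by auto
    qed
  qed
  then have "card (lrev N \<phi> a ` {..n}) \<le> card (lrev M \<phi> a ` {..mn})" by (intro card_mono) auto
  then show ?thesis using mn by simp
qed

lemma finite_lrev_N: "finite (range (lrev N \<phi> a)) \<and> card (range (lrev N \<phi> a)) \<le> Nc + 2"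
  by (rule finite_range_card_le) (rule card_lrev_N_image)

lemma N_halts: "\<exists>n. halted_at N \<phi> a n"
proof (rule ccontr)
  assume nh: "\<not> (\<exists>n. halted_at N \<phi> a n)"
  have f: "finite (range (lrev N \<phi> a))" using finite_lrev_N by simp
  define B where "B = Max (range (lrev N \<phi> a))"
  have "\<And>n. n \<le> step_bound B"
  proof -
    fix n
    have "n \<le> step_bound (lrev N \<phi> a n)" using sim_inv_step_bound[OF sim_inv_run[of \<phi> a n]] nh by (auto simp: halted_at_def)
    also have "\<dots> \<le> step_bound B" using f by (intro step_bound_mono) (auto simp: B_def)
    finally show "n \<le> step_bound B" .
  qed
  from this[of "Suc (step_bound B)"] show False by simp
qed

lemma time_N_finite: "time N \<phi> a \<noteq> \<infinity>" using N_halts by (auto simp: time_def)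

lemma step_count_N_step_bound: "step_count N UNIV (\<lambda>l. step_bound l + 1)"
  unfolding step_count_def
proof (intro ballI allI impI)
  fix \<phi> a n assume le: "enat n \<le> time N \<phi> a"
  show "n \<le> step_bound (lrev N \<phi> a n) + 1"
  proof (cases n)
    case 0 then show ?thesis by simp
  next
    case (Suc k)
    have "\<exists>j. halted_at N \<phi> a j" by (rule N_halts)
    then have "enat n \<le> enat (LEAST j. halted_at N \<phi> a j)" using le by (simp add: time_def)
    then have "k < (LEAST j. halted_at N \<phi> a j)" using Suc by simp
    then have "\<not> halted_at N \<phi> a k" by (rule not_less_Least)
    then have "k \<le> step_bound (lrev N \<phi> a k)" using sim_inv_step_bound[OF sim_inv_run[of \<phi> a k]] by (simp add: halted_at_def)
    also have "\<dots> \<le> step_bound (lrev N \<phi> a n)" using Suc by (intro step_bound_mono lrev_mono) simp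
    finally show ?thesis using Suc by simp
  qed
qed

definition step_poly :: "nat \<Rightarrow> nat" where
  "step_poly l = Nc * ((l+2)^K * (2*l+5) + ((K+4)*(l+1)+10)) + 2*((K+4)*(l+1)+10) + (l+2)^K*(2*l+5) + 2*l + 5"

lemma step_bound_le_step_poly: "step_bound l + 1 \<le> step_poly l"
proof -
  have g: "clock_max (Suc l) \<le> (l+2)^K" by (simp add: clock_max_def)
  have t: "tick_cost (Suc l) = 2*l+5" by (simp add: tick_cost_def)
  have x: "overhead (Suc l) = (K+4)*(l+1)+10" by (simp add: overhead_def)
  have "step_bound l + 1 = Nc * phase_cost (Suc l) + clock_max (Suc l) * tick_cost (Suc l)
      + (2 * ((K+4)*(l+1)+10) + 2*l + 5)"
    by (simp add: step_bound_def phase_bound_def x)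
  also have "\<dots> \<le> Nc * ((l+2)^K * (2*l+5) + ((K+4)*(l+1)+10)) + (l+2)^K * (2*l+5)
      + (2 * ((K+4)*(l+1)+10) + 2*l + 5)"
    using g unfolding phase_cost_def t x by (intro add_mono mult_le_mono) auto
  also have "\<dots> = step_poly l" by (simp add: step_poly_def)
  finally show ?thesis .
qed

lemma is_polynomial_step_poly: "is_polynomial step_poly"
proof -
  have "is_polynomial (\<lambda>l. Nc * ((l+2)^K * (2*l+5) + ((K+4)*(l+1)+10)) + 2*((K+4)*(l+1)+10) + (l+2)^K*(2*l+5) + 2*l + 5)"
    by (intro is_polynomial_add is_polynomial_mult is_polynomial_power is_polynomial_const is_polynomial_id)
  then show ?thesis by (simp add: step_poly_def[abs_def])
qed

lemma step_count_N: "step_count N UNIV step_poly"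
  using step_count_N_step_bound step_bound_le_step_poly unfolding step_count_def by (meson le_trans)

lemma output_N:
  assumes "\<phi> \<in> A"
  shows "otm_output N \<phi> a = otm_output M \<phi> a"
proof -
  define n0 where "n0 = (LEAST j. halted_at N \<phi> a j)"
  have "halted_at N \<phi> a n0" unfolding n0_def using N_halts by (rule LeastI_ex)
  then have "fst (run N \<phi> a n0) = HALT" by (simp add: halted_at_def)
  then obtain m where meq: "agrees (snd (run N \<phi> a n0)) (snd (run M \<phi> a m))" and hm: "fst (run M \<phi> a m) = qhalt M"
    using sim_inv_halt[OF sim_inv_run[of \<phi> a n0]] assms by blast
  have hM: "halted_at M \<phi> a m" using hm by (simp add: halted_at_def)
  define m0 where "m0 = (LEAST j. halted_at M \<phi> a j)"
  have h0M: "halted_at M \<phi> a m0" unfolding m0_def using hM by (rule LeastI)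
  have "m0 \<le> m" unfolding m0_def using hM by (rule Least_le)
  then have rr: "run M \<phi> a m = run M \<phi> a m0" by (rule run_halted_stable[OF h0M])
  have "otm_output N \<phi> a = content (snd (run N \<phi> a n0) ! 3)" by (simp add: otm_output_def n0_def)
  also have "\<dots> = content (snd (run M \<phi> a m) ! 3)" using meq ntapes_M_ge by (simp add: agrees_def)
  also have "\<dots> = otm_output M \<phi> a" using rr by (simp add: otm_output_def m0_def)
  finally show ?thesis .
qed

theorem N_strongly_ptime_extension: "strongly_ptime (\<lambda>\<phi>. otm_output N \<phi>) \<and> (\<forall>\<phi>\<in>A. otm_output N \<phi> = otm_output M \<phi>)"
proof
  show "strongly_ptime (\<lambda>\<phi>. otm_output N \<phi>)"
    unfolding strongly_ptime_def restricted_strongly_ptime_def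
  proof (intro exI conjI)
    show "wf_otm N" by (rule wf_N)
    show "computes N UNIV (\<lambda>\<phi>. otm_output N \<phi>)" using time_N_finite by (simp add: computes_def)
    show "finite_length_revision N UNIV" unfolding finite_length_revision_def using finite_lrev_N by blast
    show "is_polynomial step_poly" by (rule is_polynomial_step_poly)
    show "step_count N UNIV step_poly" by (rule step_count_N)
  qed
  show "\<forall>\<phi>\<in>A. otm_output N \<phi> = otm_output M \<phi>" using output_N by auto
qed

end

theorem mainTheorem12:
  fixes A :: "strfun set" and F :: "strfun \<Rightarrow> strfun"
  assumes "restricted_strongly_ptime A F"
  shows "\<exists>G. strongly_ptime G \<and> (\<forall>\<phi>\<in>A. G \<phi> = F \<phi>)"
proof -
  from assms obtain M t where wf: "wf_otm M" and comp: "computes M A F" and flr: "finite_length_revision M A"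
    and tp: "is_polynomial t" and sc: "step_count M A t"
    unfolding restricted_strongly_ptime_def by blast
  from flr obtain Nc where flr': "\<forall>\<phi>\<in>A. \<forall>a. finite (range (lrev M \<phi> a)) \<and> card (range (lrev M \<phi> a)) \<le> Nc"
    unfolding finite_length_revision_def by blast
  from tp obtain K where tK: "\<forall>x. t x < (x+2)^K" using is_polynomial_less_power by blast
  interpret E: clocked_sim M K Nc A t using wf sc flr' tK by unfold_locales
  have "\<forall>\<phi>\<in>A. otm_output M \<phi> = F \<phi>" using comp by (auto simp: computes_def fun_eq_iff)
  then show ?thesis using E.N_strongly_ptime_extension by (intro exI[of _ "otm_output E.N"]) auto
qed

end
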